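(* $\{M^{(1)}_n\}$ and $\{M^{(2)}_n\}$ are martingale difference sequences with respect to the increasing $\sigma$-fields $\mathcal F_n:=\sigma(x_m,y_m,M^{(1)}_{m},M^{(2)}_{m},m\le n)$, $n\ge0$, and there exist constants $K^{(1)},K^{(2)}>0$ such that for all $n\ge0$: $\mathbb E[\|M^{(1)}_{n+1}\|_2^2\mid\mathcal F_n]\le K^{(1)}(1+\|x_n\|_2^2+\|y_n\|_2^2)$ and $\mathbb E[\|M^{(2)}_{n+1}\|_2^2\mid\mathcal F_n]\le K^{(2)}(1+\|x_n\|_2^2+\|y_n\|_2^2)$.
   Context: $\mathcal S,\mathcal A$ finite, $P$ a transition kernel, $r$ a reward with $|r|\le\bar r$, $T\ge1$, $\Omega=\mathcal S$, $\mathcal S^{\mathrm{de}}=\{0,\dots,T-1\}$ with cyclic deterministic kernel $P^{\mathrm{de}}$, $\mathcal S^{\mathrm h}=\mathcal S$, $\mathcal S^{\mathrm l}=\mathcal S\times\Omega\times\mathcal S^{\mathrm{de}}$, bounded $r^{\mathrm l}$, $\gamma^{\mathrm h},\gamma^{\mathrm l}\in(0,1)$. High-level kernel $P^{\mathrm h}_{\pi^{\mathrm l}}(s'|s,\omega)=\sum_{s_1..s_{T-1},a_0..a_{T-1}}\prod_{i=1}^TP(s_i|s_{i-1},a_{i-1})\pi^{\mathrm l}(a_{i-1}|(s_{i-1},\omega,i-1))$ ($s_0=s,s_T=s'$), high-level reward $r^{\mathrm h}_{\pi^{\mathrm l}}(s,\omega)=\mathbb E[\sum_{k=0}^{T-1}(\gamma^{\mathrm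 h})^kr(s_k,a_k)|s_0=s]$ with $a_k\sim\pi^{\mathrm l}(\cdot|(s_k,\omega,k))$; low-level kernel $P^{\mathrm l}_{\pi^{\mathrm h}}((s',\omega',d')|(s,\omega,d),a)=P^{\mathrm{de}}(d'|d)P(s'|s,a)q$, $q=0$ if $d\ne T-1,\omega'\ne\omega$; $q=1$ if $d\ne T-1,\omega'=\omega$; $q=\pi^{\mathrm h}(\omega'|s)$ if $d=T-1$. Feudal Q-learning iterates $Q^{\mathrm h,n}$, $Q^{\mathrm l,n}$ are written as $y_n=\mathrm{vec}(Q^{\mathrm h,n})$, $x_n=\mathrm{vec}(Q^{\mathrm l,n})$ and updated from on-policy samples generated with $\pi^{\mathrm h}=\pi^{\mathrm h,n}$, $\pi^{\mathrm l}=\pi^{\mathrm l,n}$ (policies determined by the current iterates). The noise terms are vectors with components $M^{(1)}_{n+1,s^{\mathrm l},a}=\gamma^{\mathrm l}\max_{a'}Q^{\mathrm l,n}(s^{\mathrm l}_{k+1},a')-\gamma^{\mathrm l}\mathbb E_{s^{\mathrm l,+}\sim P^{\mathrm l}_{\pi^{\mathrm h}}(\cdot|s^{\mathrm l},a)}[\max_{a^+}Q^{\mathrm l,n}(s^{\mathrm l,+},a^+)]$, with $s^{\mathrm l}_{k+1}\sim P^{\mathrm l}_{\pi^{\mathrm h}}(\cdot|s^{\mathrm l},a)$, and $M^{(2)}_{n+1,s^{\mathrm h},\omega}=(\gamma^{\mathrm h})^T\max_{\omega'}Q^{\mathrm h,n}(s^{\mathrm h}_{t+1},\omega')-(\gamma^{\mathrm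 h})^T\mathbb E_{s^{\mathrm h,+}\sim P^{\mathrm h}_{\pi^{\mathrm l}}(\cdot|s^{\mathrm h},\omega)}[\max_{\omega^+}Q^{\mathrm h,n}(s^{\mathrm h,+},\omega^+)]+\sum_{k=0}^{T-1}(\gamma^{\mathrm h})^kr(s_{tT+k},a_{tT+k})-r^{\mathrm h}_{\pi^{\mathrm l}}(s^{\mathrm h},\omega)$, where the sampled segment starts at $s_{tT}=s^{\mathrm h}$ with goal $\omega$, $a_{tT+k}\sim\pi^{\mathrm l}(\cdot|s^{\mathrm l}_{tT+k})$, $s^{\mathrm l}_{tT+k+1}\sim P^{\mathrm l}_{\pi^{\mathrm h}}(\cdot|s^{\mathrm l}_{tT+k},a_{tT+k})$, and $s^{\mathrm h}_{t+1}=s_{(t+1)T}$. *)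

theory Defs
  imports "HOL-Probability.Probability"
begin

text \<open>States 's, actions 'a (finite types); goals \<Omega> = 's;
  decision-time states {0..<T}; low-level states ('s \<times> 's \<times> nat) with d < T.
  A kernel P is written P s a s' = P(s'|s,a); a policy pi s w = pi(w|s).\<close>

definition Sl :: "nat \<Rightarrow> ('s \<times> 's \<times> nat) set" where
  "Sl T = UNIV \<times> UNIV \<times> {..<T}"

definition Pde :: "nat \<Rightarrow> nat \<Rightarrow> nat \<Rightarrow> real" where
  "Pde T d d' = (if d' = Suc d mod T then 1 else 0)"

definition Pl :: "nat \<Rightarrow> ('s \<Rightarrow> 'a \<Rightarrow> 's \<Rightarrow> real) \<Rightarrow> ('s \<Rightarrow> 's \<Rightarrow> real)
    \<Rightarrow> ('s \<times> 's \<times> nat) \<Rightarrow> 'a \<Rightarrow> ('s \<times> 's \<times> nat) \<Rightarrow> real" where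
  "Pl T P pih sl a sl' = (case sl of (s, w, d) \<Rightarrow> case sl' of (s', w', d') \<Rightarrow>
     Pde T d d' * P s a s' *
     (if d \<noteq> T - 1 then (if w' = w then 1 else 0) else pih s w'))"

text \<open>Paths of one high-level segment: states s_0..s_T and actions a_0..a_{T-1}.\<close>
definition seg_prob :: "nat \<Rightarrow> ('s \<Rightarrow> 'a \<Rightarrow> 's \<Rightarrow> real) \<Rightarrow> ('s \<times> 's \<times> nat \<Rightarrow> 'a \<Rightarrow> real)
    \<Rightarrow> 's \<Rightarrow> (nat \<Rightarrow> 's) \<Rightarrow> (nat \<Rightarrow> 'a) \<Rightarrow> real" where
  "seg_prob T P pil w ss as =
     (\<Prod>i\<in>{1..T}. P (ss (i - 1)) (as (i - 1)) (ss i) * pil (ss (i - 1), w, i - 1) (as (i - 1)))"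

definition seg_states :: "nat \<Rightarrow> 's \<Rightarrow> (nat \<Rightarrow> 's) set" where
  "seg_states T s = {ss \<in> PiE {..T} (\<lambda>_. UNIV). ss 0 = s}"

definition seg_actions :: "nat \<Rightarrow> (nat \<Rightarrow> 'a) set" where
  "seg_actions T = PiE {..<T} (\<lambda>_. UNIV)"

definition Ph :: "nat \<Rightarrow> ('s \<Rightarrow> 'a \<Rightarrow> 's \<Rightarrow> real) \<Rightarrow> ('s \<times> 's \<times> nat \<Rightarrow> 'a \<Rightarrow> real)
    \<Rightarrow> 's \<Rightarrow> 's \<Rightarrow> 's \<Rightarrow> real" where
  "Ph T P pil s w s' =
     (\<Sum>ss\<in>{ss \<in> seg_states T s. ss T = s'}. \<Sum>as\<in>seg_actions T. seg_prob T P pil w ss as)"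

definition rh :: "nat \<Rightarrow> real \<Rightarrow> ('s \<Rightarrow> 'a \<Rightarrow> 's \<Rightarrow> real) \<Rightarrow> ('s \<Rightarrow> 'a \<Rightarrow> real)
    \<Rightarrow> ('s \<times> 's \<times> nat \<Rightarrow> 'a \<Rightarrow> real) \<Rightarrow> 's \<Rightarrow> 's \<Rightarrow> real" where
  "rh T gh P r pil s w =
     (\<Sum>ss\<in>seg_states T s. \<Sum>as\<in>seg_actions T.
        seg_prob T P pil w ss as * (\<Sum>k<T. gh ^ k * r (ss k) (as k)))"

definition maxQ :: "('x \<Rightarrow> 'y::finite \<Rightarrow> real) \<Rightarrow> 'x \<Rightarrow> real" where
  "maxQ Q x = Max (range (Q x))"

definition sqnorm_l :: "nat \<Rightarrow> ('s::finite \<times> 's \<times> nat \<Rightarrow> 'a::finite \<Rightarrow> real) \<Rightarrow> real" where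
  "sqnorm_l T Q = (\<Sum>sl\<in>Sl T. \<Sum>a\<in>UNIV. (Q sl a)\<^sup>2)"

definition sqnorm_h :: "('s::finite \<Rightarrow> 's \<Rightarrow> real) \<Rightarrow> real" where
  "sqnorm_h Q = (\<Sum>s\<in>UNIV. \<Sum>w\<in>UNIV. (Q s w)\<^sup>2)"

text \<open>Noise M^{(1)}_{n+1} as a function of the iterate Q^{l,n}, the high-level policy
  and the sampled next low-level states (one per component).\<close>
definition noise1 :: "nat \<Rightarrow> real \<Rightarrow> ('s \<Rightarrow> 'a \<Rightarrow> 's \<Rightarrow> real) \<Rightarrow> ('s \<Rightarrow> 's \<Rightarrow> real)
    \<Rightarrow> ('s \<times> 's \<times> nat \<Rightarrow> 'a::finite \<Rightarrow> real) \<Rightarrow> ('s \<times> 's \<times> nat \<Rightarrow> 'a \<Rightarrow> 's \<times> 's \<times> nat)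
    \<Rightarrow> ('s \<times> 's \<times> nat) \<Rightarrow> 'a \<Rightarrow> real" where
  "noise1 T gl P pih Ql nexts sl a =
     gl * maxQ Ql (nexts sl a) - gl * (\<Sum>sp\<in>Sl T. Pl T P pih sl a sp * maxQ Ql sp)"

text \<open>Noise M^{(2)}_{n+1}; segS s w k / segA s w k are the sampled states / actions
  of the segment started at s with goal w.\<close>
definition noise2 :: "nat \<Rightarrow> real \<Rightarrow> ('s::finite \<Rightarrow> 'a \<Rightarrow> 's \<Rightarrow> real) \<Rightarrow> ('s \<Rightarrow> 'a \<Rightarrow> real)
    \<Rightarrow> ('s \<times> 's \<times> nat \<Rightarrow> 'a \<Rightarrow> real) \<Rightarrow> ('s \<Rightarrow> 's \<Rightarrow> real)
    \<Rightarrow> ('s \<Rightarrow> 's \<Rightarrow> nat \<Rightarrow> 's) \<Rightarrow> ('s \<Rightarrow> 's \<Rightarrow> nat \<Rightarrow> 'a) \<Rightarrow> 's \<Rightarrow> 's \<Rightarrow> real" where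
  "noise2 T gh P r pil Qh segS segA s w =
     gh ^ T * maxQ Qh (segS s w T)
     - gh ^ T * (\<Sum>sp\<in>UNIV. Ph T P pil s w sp * maxQ Qh sp)
     + (\<Sum>k<T. gh ^ k * r (segS s w k) (segA s w k))
     - rh T gh P r pil s w"

definition gen_sigma :: "'w measure \<Rightarrow> ('w \<Rightarrow> real) set \<Rightarrow> 'w measure" where
  "gen_sigma M fs = sigma (space M) (\<Union>f\<in>fs. {f -` A \<inter> space M | A. A \<in> sets borel})"

definition QHspace :: "('s \<Rightarrow> 's \<Rightarrow> real) measure" where
  "QHspace = PiM UNIV (\<lambda>_. PiM UNIV (\<lambda>_. borel))"

definition QLspace :: "('s \<times> 's \<times> nat \<Rightarrow> 'a \<Rightarrow> real) measure" where
  "QLspace = PiM UNIV (\<lambda>_. PiM UNIV (\<lambda>_. borel))"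

text \<open>The noise processes along the iteration (index n stands for M_{n+1}).\<close>
definition noiseL where
  "noiseL T gl P Pih Qh Ql smp n \<omega> =
     noise1 T gl P (Pih (Qh n \<omega>) (Ql n \<omega>)) (Ql n \<omega>) (smp n \<omega>)"

definition noiseH where
  "noiseH T gh P r Pil Qh Ql segS segA n \<omega> =
     noise2 T gh P r (Pil (Qh n \<omega>) (Ql n \<omega>)) (Qh n \<omega>) (segS n \<omega>) (segA n \<omega>)"

text \<open>F_n = sigma(x_m, y_m, M^{(1)}_m, M^{(2)}_m, m \<le> n); with the index shift,
  M^{(i)}_m for 1 \<le> m \<le> n is (noise process) at index m-1 < n.\<close>
definition filt :: "'w measure \<Rightarrow> nat \<Rightarrow> (nat \<Rightarrow> 'w \<Rightarrow> 's \<Rightarrow> 's \<Rightarrow> real)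
    \<Rightarrow> (nat \<Rightarrow> 'w \<Rightarrow> 's \<times> 's \<times> nat \<Rightarrow> 'a \<Rightarrow> real)
    \<Rightarrow> (nat \<Rightarrow> 'w \<Rightarrow> 's \<times> 's \<times> nat \<Rightarrow> 'a \<Rightarrow> real)
    \<Rightarrow> (nat \<Rightarrow> 'w \<Rightarrow> 's \<Rightarrow> 's \<Rightarrow> real) \<Rightarrow> nat \<Rightarrow> 'w measure" where
  "filt M T Qh Ql M1 M2 n = gen_sigma M
            ({(\<lambda>\<omega>. Ql m \<omega> sl a) | m sl a. m \<le> n \<and> sl \<in> Sl T}
           \<union> {(\<lambda>\<omega>. Qh m \<omega> s w) | m s w. m \<le> n}
           \<union> {(\<lambda>\<omega>. M1 m \<omega> sl a) | m sl a. m < n \<and> sl \<in> Sl T}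
           \<union> {(\<lambda>\<omega>. M2 m \<omega> s w) | m s w. m < n})"

end

theory Submission
  imports Defs
begin

text \<open>Both noise terms have the form V(X) - (\<Sum>x. V(x) p(x)): X is the sample drawn after step n
  (the next low-level state, respectively the whole segment of T states and actions), V is
  measurable with respect to the information H n available before the draw, and p(x) is the
  conditional probability of X = x given H n. As X takes finitely many values almost surely,
  E[V(X) | H n] = \<Sum>x. V(x) p(x), so the noise is an H n martingale difference, and the tower
  property passes this on to the coarser sigma-fields F n generated by the iterates and the past
  noise. For the second moments, every max_a Q(x, a) is bounded by the Euclidean norm of Q,
  probabilities by 1 and discounted segment rewards by T rbar; hence the squared norm of the
  noise is bounded, almost surely, by an affine function of the squared norms of the iterates,
  and monotonicity of conditional expectation yields the constants K1 and K2.\<close>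

section \<open>Conditional expectations of discrete samples\<close>

lemma (in sigma_finite_subalgebra) real_cond_exp_centered:
  assumes f: "integrable M f" and g: "g \<in> borel_measurable F"
    and ce: "AE \<omega> in M. real_cond_exp M F f \<omega> = g \<omega>"
  shows "integrable M (\<lambda>\<omega>. f \<omega> - g \<omega>)"
    and "AE \<omega> in M. real_cond_exp M F (\<lambda>\<omega>. f \<omega> - g \<omega>) \<omega> = 0"
proof -
  have g_int: "integrable M g"
    using integrable_cong_AE_imp[OF real_cond_exp_int(1)[OF f] measurable_from_subalg[OF subalg g] ce] .
  then show "integrable M (\<lambda>\<omega>. f \<omega> - g \<omega>)" using f by auto
  have "AE \<omega> in M. real_cond_exp M F g \<omega> = g \<omega>" using g_int g by (rule real_cond_exp_F_meas)
  with real_cond_exp_diff[OF f g_int] ce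
  show "AE \<omega> in M. real_cond_exp M F (\<lambda>\<omega>. f \<omega> - g \<omega>) \<omega> = 0" by eventually_elim simp
qed

lemma (in finite_measure_subalgebra) AE_mem_of_real_cond_exp_indicator_eq_0:
  assumes S: "countable (- S)"
    and X_meas: "\<And>x. x \<notin> S \<Longrightarrow> {\<omega> \<in> space M. X \<omega> = x} \<in> sets M"
    and zero: "\<And>x. x \<notin> S \<Longrightarrow> AE \<omega> in M. real_cond_exp M F (indicator {\<omega>. X \<omega> = x}) \<omega> = 0"
  shows "AE \<omega> in M. X \<omega> \<in> S"
proof -
  have "AE \<omega> in M. X \<omega> \<noteq> x" if x: "x \<notin> S" for x
  proof -
    let ?A = "{\<omega> \<in> space M. X \<omega> = x}"
    have A: "?A \<in> sets M" using X_meas[OF x] .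
    have "AE \<omega> in M. real_cond_exp M F (indicator ?A) \<omega> = real_cond_exp M F (indicator {\<omega>. X \<omega> = x}) \<omega>"
      using A borel_measurable_indicator'[where f="\<lambda>\<omega>. \<omega>" and A="\<lambda>_. {\<omega>. X \<omega> = x}"]
      by (intro real_cond_exp_cong) (auto simp: indicator_def borel_measurable_indicator)
    with zero[OF x] have ce0: "AE \<omega> in M. real_cond_exp M F (indicator ?A) \<omega> = 0"
      by eventually_elim simp
    have "measure M ?A = (\<integral>\<omega>. indicator ?A \<omega> \<partial>M)" using A by simp
    also have "\<dots> = (\<integral>\<omega>. real_cond_exp M F (indicator ?A) \<omega> \<partial>M)"
      using A by (intro real_cond_exp_int(2)[symmetric] integrable_real_indicator)
        (auto simp: less_top[symmetric])
    also have "\<dots> = 0" using ce0 by (simp add: integral_eq_zero_AE)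
    finally have "?A \<in> null_sets M" using A by (simp add: emeasure_eq_measure null_sets_def)
    from AE_not_in[OF this] show ?thesis by (rule AE_mp) auto
  qed
  then have "AE \<omega> in M. \<forall>x\<in>- S. X \<omega> \<noteq> x" using S by (intro AE_ball_countable') auto
  then show ?thesis by eventually_elim auto
qed

lemma (in finite_measure_subalgebra) real_cond_exp_discrete:
  assumes S: "finite S" and X_in: "AE \<omega> in M. X \<omega> \<in> S"
    and X_meas: "\<And>x. {\<omega> \<in> space M. X \<omega> = x} \<in> sets M"
    and V_meas: "\<And>x. (\<lambda>\<omega>. V \<omega> x) \<in> borel_measurable F"
    and V_int: "\<And>x. integrable M (\<lambda>\<omega>. V \<omega> x)"
    and VX_meas: "(\<lambda>\<omega>. V \<omega> (X \<omega>)) \<in> borel_measurable M"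
    and law: "\<And>x. x \<in> S \<Longrightarrow> AE \<omega> in M. real_cond_exp M F (indicator {\<omega>. X \<omega> = x}) \<omega> = p \<omega> x"
  shows "integrable M (\<lambda>\<omega>. V \<omega> (X \<omega>))"
    and "AE \<omega> in M. real_cond_exp M F (\<lambda>\<omega>. V \<omega> (X \<omega>)) \<omega> = (\<Sum>x\<in>S. V \<omega> x * p \<omega> x)"
proof -
  define g where "g x \<omega> = V \<omega> x * indicator {\<omega>. X \<omega> = x} \<omega>" for x \<omega>
  have ind_meas: "indicator {\<omega>. X \<omega> = x} \<in> borel_measurable M" for x
    using X_meas borel_measurable_indicator'[where f="\<lambda>\<omega>. \<omega>" and A="\<lambda>_. {\<omega>. X \<omega> = x}"] by simp
  have g_int: "integrable M (g x)" for x
  proof (rule Bochner_Integration.integrable_bound[OF V_int[of x]])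
    show "g x \<in> borel_measurable M"
      unfolding g_def using measurable_from_subalg[OF subalg V_meas] ind_meas by (rule borel_measurable_times)
  qed (auto simp: g_def indicator_def)
  have VX_eq: "AE \<omega> in M. V \<omega> (X \<omega>) = (\<Sum>x\<in>S. g x \<omega>)"
    using X_in by eventually_elim (simp add: g_def indicator_def S)
  have sum_meas: "(\<lambda>\<omega>. \<Sum>x\<in>S. g x \<omega>) \<in> borel_measurable M"
    using g_int by auto
  show "integrable M (\<lambda>\<omega>. V \<omega> (X \<omega>))"
  proof (rule integrable_cong_AE_imp[OF _ VX_meas])
    show "integrable M (\<lambda>\<omega>. \<Sum>x\<in>S. g x \<omega>)" using g_int by auto
    show "AE \<omega> in M. (\<Sum>x\<in>S. g x \<omega>) = V \<omega> (X \<omega>)" using VX_eq by eventually_elim simp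
  qed
  have "AE \<omega> in M. real_cond_exp M F (g x) \<omega> = V \<omega> x * p \<omega> x" if x: "x \<in> S" for x
  proof -
    have "AE \<omega> in M. real_cond_exp M F (g x) \<omega> = V \<omega> x * real_cond_exp M F (indicator {\<omega>. X \<omega> = x}) \<omega>"
      unfolding g_def using V_meas ind_meas g_int[of x, unfolded g_def] by (rule real_cond_exp_mult)
    with law[OF x] show ?thesis by eventually_elim simp
  qed
  then have "AE \<omega> in M. \<forall>x\<in>S. real_cond_exp M F (g x) \<omega> = V \<omega> x * p \<omega> x"
    using S by (rule AE_finite_allI[rotated])
  moreover have "AE \<omega> in M. real_cond_exp M F (\<lambda>\<omega>. V \<omega> (X \<omega>)) \<omega> = real_cond_exp M F (\<lambda>\<omega>. \<Sum>x\<in>S. g x \<omega>) \<omega>"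
    using VX_eq VX_meas sum_meas by (rule real_cond_exp_cong)
  moreover have "AE \<omega> in M. real_cond_exp M F (\<lambda>\<omega>. \<Sum>x\<in>S. g x \<omega>) \<omega> = (\<Sum>x\<in>S. real_cond_exp M F (g x) \<omega>)"
    using g_int by (rule real_cond_exp_sum)
  ultimately show "AE \<omega> in M. real_cond_exp M F (\<lambda>\<omega>. V \<omega> (X \<omega>)) \<omega> = (\<Sum>x\<in>S. V \<omega> x * p \<omega> x)"
    by eventually_elim simp
qed

lemma (in finite_measure_subalgebra) real_cond_exp_eq_0_of_finer:
  assumes G: "subalgebra M G" and FG: "sets F \<subseteq> sets G" and f: "integrable M f"
    and ce: "AE \<omega> in M. real_cond_exp M G f \<omega> = 0"
  shows "AE \<omega> in M. real_cond_exp M F f \<omega> = 0"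
proof -
  have "subalgebra G F" using G subalg FG by (auto simp: subalgebra_def)
  from G this f have "AE \<omega> in M. real_cond_exp M F (real_cond_exp M G f) \<omega> = real_cond_exp M F f \<omega>"
    by (rule real_cond_exp_nested_subalg)
  moreover have "AE \<omega> in M. real_cond_exp M F (real_cond_exp M G f) \<omega> = real_cond_exp M F (\<lambda>_. 0) \<omega>"
    using ce by (intro real_cond_exp_cong) auto
  moreover have "AE \<omega> in M. real_cond_exp M F (\<lambda>_. 0) \<omega> = 0"
    by (rule real_cond_exp_F_meas) auto
  ultimately show ?thesis by eventually_elim simp
qed

lemma linear_growth_le:
  fixes a b c x y :: real
  assumes "0 \<le> a" "0 \<le> b" "0 \<le> c" "0 \<le> x" "0 \<le> y"
  shows "a * x + b * y + c \<le> (a + b + c + 1) * (1 + x + y)"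
proof -
  have "(a + b + c + 1) * (1 + x + y) = a * x + b * y + c
      + (a + a * y + b + b * x + c * x + c * y + 1 + x + y)"
    by (simp add: algebra_simps)
  moreover have "0 \<le> a * y" "0 \<le> b * x" "0 \<le> c * x" "0 \<le> c * y"
    using assms by simp_all
  ultimately show ?thesis using assms by linarith
qed

lemma (in sigma_finite_subalgebra) nn_cond_exp_le_measurable_bound:
  assumes f: "f \<in> borel_measurable M" and g: "g \<in> borel_measurable F"
    and le: "AE \<omega> in M. f \<omega> \<le> g \<omega>"
  shows "AE \<omega> in M. nn_cond_exp M F (\<lambda>\<omega>. ennreal (f \<omega>)) \<omega> \<le> ennreal (g \<omega>)"
proof -
  have "AE \<omega> in M. nn_cond_exp M F (\<lambda>\<omega>. ennreal (f \<omega>)) \<omega> \<le> nn_cond_exp M F (\<lambda>\<omega>. ennreal (g \<omega>)) \<omega>"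
    using le f measurable_from_subalg[OF subalg g] by (intro nn_cond_exp_mono) (auto intro: ennreal_leI)
  moreover have "AE \<omega> in M. ennreal (g \<omega>) = nn_cond_exp M F (\<lambda>\<omega>. ennreal (g \<omega>)) \<omega>"
    using g by (intro nn_cond_exp_F_meas) measurable
  ultimately show ?thesis by eventually_elim simp
qed

lemma (in finite_measure) ex_nn_cond_exp_le_linear_growth:
  assumes F_sub: "\<And>n. subalgebra M (F n)"
    and f_meas: "\<And>n. f n \<in> borel_measurable M"
    and X_meas: "\<And>n. X n \<in> borel_measurable (F n)" and Y_meas: "\<And>n. Y n \<in> borel_measurable (F n)"
    and X_nonneg: "\<And>n \<omega>. 0 \<le> X n \<omega>" and Y_nonneg: "\<And>n \<omega>. 0 \<le> Y n \<omega>"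
    and abc: "0 \<le> a" "0 \<le> b" "0 \<le> c"
    and f_le: "\<And>n. AE \<omega> in M. f n \<omega> \<le> a * X n \<omega> + b * Y n \<omega> + c"
  shows "\<exists>K>0. \<forall>n. AE \<omega> in M.
    nn_cond_exp M (F n) (\<lambda>\<omega>. ennreal (f n \<omega>)) \<omega> \<le> ennreal (K * (1 + X n \<omega> + Y n \<omega>))"
proof (intro exI conjI allI)
  show "0 < a + b + c + 1" using abc by linarith
  fix n
  interpret finite_measure_subalgebra M "F n" by unfold_locales (rule F_sub)
  show "AE \<omega> in M. nn_cond_exp M (F n) (\<lambda>\<omega>. ennreal (f n \<omega>)) \<omega>
      \<le> ennreal ((a + b + c + 1) * (1 + X n \<omega> + Y n \<omega>))"
  proof (rule nn_cond_exp_le_measurable_bound[OF f_meas])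
    show "(\<lambda>\<omega>. (a + b + c + 1) * (1 + X n \<omega> + Y n \<omega>)) \<in> borel_measurable (F n)"
      using X_meas Y_meas by measurable
    show "AE \<omega> in M. f n \<omega> \<le> (a + b + c + 1) * (1 + X n \<omega> + Y n \<omega>)"
      using f_le[of n]
    proof eventually_elim
      case (elim \<omega>)
      with linear_growth_le[OF abc X_nonneg[of n \<omega>] Y_nonneg[of n \<omega>]] show ?case by linarith
    qed
  qed
qed

section \<open>The filtration generated by the iterates and the noise\<close>

lemma space_gen_sigma [simp]: "space (gen_sigma M fs) = space M"
  unfolding gen_sigma_def by (rule space_measure_of) auto

lemma sets_gen_sigma:
  "sets (gen_sigma M fs) = sigma_sets (space M) (\<Union>f\<in>fs. {f -` A \<inter> space M | A. A \<in> sets borel})"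
  unfolding gen_sigma_def by (rule sets_measure_of) auto

lemma measurable_gen_sigma: "f \<in> fs \<Longrightarrow> f \<in> borel_measurable (gen_sigma M fs)"
  by (auto simp: measurable_def sets_gen_sigma)

lemma sets_gen_sigma_le:
  assumes "space N = space M" and "\<And>f. f \<in> fs \<Longrightarrow> f \<in> borel_measurable N"
  shows "sets (gen_sigma M fs) \<subseteq> sets N"
  unfolding sets_gen_sigma assms(1)[symmetric]
  using measurable_sets[OF assms(2)] by (intro sigma_sets_le_sets_iff[THEN iffD2]) auto

lemma sets_gen_sigma_mono: "fs \<subseteq> gs \<Longrightarrow> sets (gen_sigma M fs) \<subseteq> sets (gen_sigma M gs)"
  unfolding sets_gen_sigma by (rule sigma_sets_mono') auto

lemma subalgebra_gen_sigma:
  "(\<And>f. f \<in> fs \<Longrightarrow> f \<in> borel_measurable M) \<Longrightarrow> subalgebra M (gen_sigma M fs)"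
  unfolding subalgebra_def using sets_gen_sigma_le[of M M fs] by auto

definition filt_gens :: "nat \<Rightarrow> (nat \<Rightarrow> 'w \<Rightarrow> 's \<Rightarrow> 's \<Rightarrow> real)
    \<Rightarrow> (nat \<Rightarrow> 'w \<Rightarrow> 's \<times> 's \<times> nat \<Rightarrow> 'a \<Rightarrow> real)
    \<Rightarrow> (nat \<Rightarrow> 'w \<Rightarrow> 's \<times> 's \<times> nat \<Rightarrow> 'a \<Rightarrow> real)
    \<Rightarrow> (nat \<Rightarrow> 'w \<Rightarrow> 's \<Rightarrow> 's \<Rightarrow> real) \<Rightarrow> nat \<Rightarrow> ('w \<Rightarrow> real) set" where
  "filt_gens T Qh Ql noise_l noise_h n =
     {(\<lambda>\<omega>. Ql m \<omega> sl a) | m sl a. m \<le> n \<and> sl \<in> Sl T}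
   \<union> {(\<lambda>\<omega>. Qh m \<omega> s w) | m s w. m \<le> n}
   \<union> {(\<lambda>\<omega>. noise_l m \<omega> sl a) | m sl a. m < n \<and> sl \<in> Sl T}
   \<union> {(\<lambda>\<omega>. noise_h m \<omega> s w) | m s w. m < n}"

lemma filt_eq_gen_sigma: "filt M T Qh Ql noise_l noise_h n = gen_sigma M (filt_gens T Qh Ql noise_l noise_h n)"
  unfolding filt_def filt_gens_def ..

lemma filt_gens_mono: "filt_gens T Qh Ql noise_l noise_h n \<subseteq> filt_gens T Qh Ql noise_l noise_h (Suc n)"
  unfolding filt_gens_def by (intro Un_mono; blast intro: le_SucI less_SucI)

lemma measurable_filt:
  shows "sl \<in> Sl T \<Longrightarrow> (\<lambda>\<omega>. Ql n \<omega> sl a) \<in> borel_measurable (filt M T Qh Ql noise_l noise_h n)"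
    and "(\<lambda>\<omega>. Qh n \<omega> s w) \<in> borel_measurable (filt M T Qh Ql noise_l noise_h n)"
    and "sl \<in> Sl T \<Longrightarrow> (\<lambda>\<omega>. noise_l n \<omega> sl a) \<in> borel_measurable (filt M T Qh Ql noise_l noise_h (Suc n))"
    and "(\<lambda>\<omega>. noise_h n \<omega> s w) \<in> borel_measurable (filt M T Qh Ql noise_l noise_h (Suc n))"
  unfolding filt_eq_gen_sigma filt_gens_def by (intro measurable_gen_sigma; blast)+

lemma filt_filtration:
  fixes M :: "'w measure" and H :: "nat \<Rightarrow> 'w measure"
  assumes H_sub: "\<And>n. subalgebra M (H n)" and H_mono: "\<And>n. sets (H n) \<subseteq> sets (H (Suc n))"
    and Ql_meas: "\<And>n sl a. sl \<in> Sl T \<Longrightarrow> (\<lambda>\<omega>. Ql n \<omega> sl a) \<in> borel_measurable (H n)"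
    and Qh_meas: "\<And>n s w. (\<lambda>\<omega>. Qh n \<omega> s w) \<in> borel_measurable (H n)"
    and noise_l_meas: "\<And>n sl a. sl \<in> Sl T \<Longrightarrow> (\<lambda>\<omega>. noise_l n \<omega> sl a) \<in> borel_measurable (H (Suc n))"
    and noise_h_meas: "\<And>n s w. (\<lambda>\<omega>. noise_h n \<omega> s w) \<in> borel_measurable (H (Suc n))"
  shows "subalgebra M (filt M T Qh Ql noise_l noise_h n)"
    and "sets (filt M T Qh Ql noise_l noise_h n) \<subseteq> sets (filt M T Qh Ql noise_l noise_h (Suc n))"
    and "sets (filt M T Qh Ql noise_l noise_h n) \<subseteq> sets (H n)"
proof -
  have H_le: "f \<in> borel_measurable (H n)" if "m \<le> n" "f \<in> borel_measurable (H m)"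
    for f :: "'w \<Rightarrow> real" and m n
  proof -
    have "sets (H m) \<subseteq> sets (H n)" using lift_Suc_mono_le[of "\<lambda>n. sets (H n)", OF H_mono \<open>m \<le> n\<close>] .
    then have "subalgebra (H n) (H m)" using H_sub[of m] H_sub[of n] by (auto simp: subalgebra_def)
    from measurable_from_subalg[OF this \<open>f \<in> borel_measurable (H m)\<close>] show ?thesis .
  qed
  have gens_H: "f \<in> borel_measurable (H n)" if "f \<in> filt_gens T Qh Ql noise_l noise_h n" for f n
    using that unfolding filt_gens_def
    by (auto intro: H_le[OF _ Ql_meas] H_le[OF _ Qh_meas] H_le[OF _ noise_l_meas] H_le[OF _ noise_h_meas]
        simp: Suc_le_eq)
  have space_H: "space (H n) = space M" for n using H_sub[of n] by (simp add: subalgebra_def)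
  show "subalgebra M (filt M T Qh Ql noise_l noise_h n)"
    unfolding filt_eq_gen_sigma using measurable_from_subalg[OF H_sub gens_H]
    by (rule subalgebra_gen_sigma)
  show "sets (filt M T Qh Ql noise_l noise_h n) \<subseteq> sets (filt M T Qh Ql noise_l noise_h (Suc n))"
    unfolding filt_eq_gen_sigma by (rule sets_gen_sigma_mono[OF filt_gens_mono])
  show "sets (filt M T Qh Ql noise_l noise_h n) \<subseteq> sets (H n)"
    unfolding filt_eq_gen_sigma by (rule sets_gen_sigma_le[OF space_H gens_H])
qed

section \<open>Q-tables, kernels and their norms\<close>

lemma measurable_PiM_PiM_borel_iff:
  fixes g :: "'w \<Rightarrow> 'x \<Rightarrow> 'y \<Rightarrow> real"
  shows "g \<in> measurable N (PiM UNIV (\<lambda>_. PiM UNIV (\<lambda>_. borel)))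
    \<longleftrightarrow> (\<forall>x y. (\<lambda>\<omega>. g \<omega> x y) \<in> borel_measurable N)"
proof
  assume g: "g \<in> measurable N (PiM UNIV (\<lambda>_. PiM UNIV (\<lambda>_. borel)))"
  show "\<forall>x y. (\<lambda>\<omega>. g \<omega> x y) \<in> borel_measurable N"
  proof (intro allI)
    fix x :: 'x and y :: 'y
    have row: "(\<lambda>q. q x) \<in> measurable (PiM UNIV (\<lambda>_. PiM UNIV (\<lambda>_. borel))) (PiM UNIV (\<lambda>_. (borel :: real measure)))"
      by (rule measurable_component_singleton) simp
    have entry: "(\<lambda>q. q y) \<in> measurable (PiM UNIV (\<lambda>_. (borel :: real measure))) borel"
      by (rule measurable_component_singleton) simp
    show "(\<lambda>\<omega>. g \<omega> x y) \<in> borel_measurable N"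
      using measurable_compose[OF measurable_compose[OF g row] entry] by simp
  qed
next
  assume "\<forall>x y. (\<lambda>\<omega>. g \<omega> x y) \<in> borel_measurable N"
  then have "(\<lambda>\<omega> x. g \<omega> x) \<in> measurable N (PiM UNIV (\<lambda>_. PiM UNIV (\<lambda>_. borel)))"
    by (intro measurable_PiM_single') (auto intro!: measurable_PiM_single' simp: space_PiM)
  then show "g \<in> measurable N (PiM UNIV (\<lambda>_. PiM UNIV (\<lambda>_. borel)))" by simp
qed

lemma measurable_policy:
  fixes pol :: "('s \<Rightarrow> 's \<Rightarrow> real) \<Rightarrow> ('s \<times> 's \<times> nat \<Rightarrow> 'a \<Rightarrow> real) \<Rightarrow> 'x \<Rightarrow> 'y \<Rightarrow> real"
  assumes pol: "(\<lambda>q. pol (fst q) (snd q))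
      \<in> measurable (PiM UNIV (\<lambda>_. PiM UNIV (\<lambda>_. borel)) \<Otimes>\<^sub>M PiM UNIV (\<lambda>_. PiM UNIV (\<lambda>_. borel)))
           (PiM UNIV (\<lambda>_. PiM UNIV (\<lambda>_. borel)))"
    and qh: "\<And>s w. (\<lambda>\<omega>. qh \<omega> s w) \<in> borel_measurable N"
    and ql: "\<And>sl a. (\<lambda>\<omega>. ql \<omega> sl a) \<in> borel_measurable N"
  shows "(\<lambda>\<omega>. pol (qh \<omega>) (ql \<omega>) x y) \<in> borel_measurable N"
proof -
  have "(\<lambda>\<omega>. (qh \<omega>, ql \<omega>))
      \<in> measurable N (PiM UNIV (\<lambda>_. PiM UNIV (\<lambda>_. borel)) \<Otimes>\<^sub>M PiM UNIV (\<lambda>_. PiM UNIV (\<lambda>_. borel)))"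
    using qh ql by (intro measurable_Pair) (simp_all add: measurable_PiM_PiM_borel_iff)
  from measurable_compose[OF this pol] show ?thesis
    by (simp add: measurable_PiM_PiM_borel_iff)
qed

lemma maxQ_attained: "\<exists>b. maxQ Q x = Q x b"
proof -
  have "Max (range (Q x)) \<in> range (Q x)" by (rule Max_in) auto
  then show ?thesis unfolding maxQ_def by blast
qed

lemma borel_measurable_maxQ:
  "(\<And>b. (\<lambda>\<omega>. Q \<omega> x b) \<in> borel_measurable N) \<Longrightarrow> (\<lambda>\<omega>. maxQ (Q \<omega>) x) \<in> borel_measurable N"
  unfolding maxQ_def by (rule borel_measurable_Max) auto

lemma integrable_maxQ:
  assumes Q_int: "\<And>b. integrable M (\<lambda>\<omega>. Q \<omega> x b)"
  shows "integrable M (\<lambda>\<omega>. maxQ (Q \<omega>) x)"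
proof (rule Bochner_Integration.integrable_bound)
  show "integrable M (\<lambda>\<omega>. \<Sum>b\<in>UNIV. \<bar>Q \<omega> x b\<bar>)" using Q_int by auto
  show "(\<lambda>\<omega>. maxQ (Q \<omega>) x) \<in> borel_measurable M"
    using Q_int by (intro borel_measurable_maxQ borel_measurable_integrable)
  show "AE \<omega> in M. norm (maxQ (Q \<omega>) x) \<le> norm (\<Sum>b\<in>UNIV. \<bar>Q \<omega> x b\<bar>)"
  proof (rule AE_I2)
    fix \<omega>
    obtain b where "maxQ (Q \<omega>) x = Q \<omega> x b" using maxQ_attained[of "Q \<omega>" x] by blast
    then show "norm (maxQ (Q \<omega>) x) \<le> norm (\<Sum>b\<in>UNIV. \<bar>Q \<omega> x b\<bar>)"
      using member_le_sum[of b UNIV "\<lambda>b. \<bar>Q \<omega> x b\<bar>"] by simp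
  qed
qed

lemma sqnorm_l_nonneg: "0 \<le> sqnorm_l T Q"
  unfolding sqnorm_l_def by (auto intro!: sum_nonneg)

lemma sqnorm_h_nonneg: "0 \<le> sqnorm_h Q"
  unfolding sqnorm_h_def by (auto intro!: sum_nonneg)

lemma finite_Sl [simp]: "finite (Sl T :: ('s::finite \<times> 's \<times> nat) set)"
  unfolding Sl_def by auto

lemma abs_maxQ_le_sqnorm_l: "x \<in> Sl T \<Longrightarrow> \<bar>maxQ Q x\<bar> \<le> sqrt (sqnorm_l T Q)"
proof -
  assume x: "x \<in> Sl T"
  obtain b where b: "maxQ Q x = Q x b" using maxQ_attained[of Q x] by blast
  have "\<bar>Q x b\<bar>\<^sup>2 \<le> (\<Sum>a\<in>UNIV. (Q x a)\<^sup>2)" by (auto intro: member_le_sum)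
  also have "\<dots> \<le> sqnorm_l T Q"
    unfolding sqnorm_l_def using x by (auto intro!: member_le_sum sum_nonneg)
  finally show ?thesis unfolding b by (rule real_le_rsqrt)
qed

lemma abs_maxQ_le_sqnorm_h: "\<bar>maxQ Q x\<bar> \<le> sqrt (sqnorm_h Q)"
proof -
  obtain b where b: "maxQ Q x = Q x b" using maxQ_attained[of Q x] by blast
  have "\<bar>Q x b\<bar>\<^sup>2 \<le> (\<Sum>w\<in>UNIV. (Q x w)\<^sup>2)" by (auto intro: member_le_sum)
  also have "\<dots> \<le> sqnorm_h Q"
    unfolding sqnorm_h_def by (auto intro!: member_le_sum sum_nonneg)
  finally show ?thesis unfolding b by (rule real_le_rsqrt)
qed

lemma sqnorm_l_le_card:
  fixes Q :: "'s::finite \<times> 's \<times> nat \<Rightarrow> 'a::finite \<Rightarrow> real"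
  assumes "\<And>sl a. sl \<in> Sl T \<Longrightarrow> (Q sl a)\<^sup>2 \<le> c"
  shows "sqnorm_l T Q \<le> real (card (Sl T :: ('s \<times> 's \<times> nat) set)) * real CARD('a) * c"
proof -
  have "sqnorm_l T Q \<le> (\<Sum>sl\<in>(Sl T :: ('s \<times> 's \<times> nat) set). \<Sum>a\<in>(UNIV :: 'a set). c)"
    unfolding sqnorm_l_def by (intro sum_mono) (simp add: assms)
  then show ?thesis by simp
qed

lemma sqnorm_h_le_card:
  fixes Q :: "'s::finite \<Rightarrow> 's \<Rightarrow> real"
  assumes "\<And>s w. (Q s w)\<^sup>2 \<le> c"
  shows "sqnorm_h Q \<le> real CARD('s) * real CARD('s) * c"
proof -
  have "sqnorm_h Q \<le> (\<Sum>s\<in>(UNIV :: 's set). \<Sum>w\<in>(UNIV :: 's set). c)"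
    unfolding sqnorm_h_def using assms by (intro sum_mono) auto
  then show ?thesis by simp
qed

lemma borel_measurable_sqnorm_l:
  "(\<And>sl a. sl \<in> Sl T \<Longrightarrow> (\<lambda>\<omega>. Q \<omega> sl a) \<in> borel_measurable N)
    \<Longrightarrow> (\<lambda>\<omega>. sqnorm_l T (Q \<omega>)) \<in> borel_measurable N"
  unfolding sqnorm_l_def by (intro borel_measurable_sum borel_measurable_power)

lemma borel_measurable_sqnorm_h:
  "(\<And>s w. (\<lambda>\<omega>. Q \<omega> s w) \<in> borel_measurable N) \<Longrightarrow> (\<lambda>\<omega>. sqnorm_h (Q \<omega>)) \<in> borel_measurable N"
  unfolding sqnorm_h_def by (intro borel_measurable_sum borel_measurable_power)

lemma le_1_of_sum_eq_1:
  fixes f :: "'x::finite \<Rightarrow> real"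
  assumes "\<And>x. 0 \<le> f x" and "(\<Sum>x\<in>UNIV. f x) = 1"
  shows "f y \<le> 1"
  using member_le_sum[of y UNIV f] assms by auto

lemma Pl_nonneg_le_1:
  assumes "\<And>s a s'. 0 \<le> P s a s'" "\<And>s a s'. P s a s' \<le> 1"
    and "\<And>s w. 0 \<le> pih s w" "\<And>s w. pih s w \<le> 1"
  shows "0 \<le> Pl T P pih sl a sp" and "Pl T P pih sl a sp \<le> 1"
  using assms by (auto simp: Pl_def Pde_def split: prod.split intro!: mult_le_one)

lemma Pl_eq_0_if_notin_Sl:
  assumes "1 \<le> T" and "sp \<notin> Sl T"
  shows "Pl T P pih sl a sp = 0"
proof -
  have "Suc d mod T < T" for d using assms(1) by simp
  then show ?thesis using assms(2) by (auto simp: Pl_def Pde_def Sl_def split: prod.split)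
qed

lemma borel_measurable_Pl:
  assumes "\<And>s w. (\<lambda>\<omega>. pih \<omega> s w) \<in> borel_measurable N"
  shows "(\<lambda>\<omega>. Pl T P (pih \<omega>) sl a sp) \<in> borel_measurable N"
proof -
  obtain s w d where sl: "sl = (s, w, d)" by (cases sl)
  obtain s' w' d' where sp: "sp = (s', w', d')" by (cases sp)
  show ?thesis unfolding sl sp Pl_def using assms by simp
qed

lemma seg_prob_nonneg_le_1:
  assumes "\<And>s a s'. 0 \<le> P s a s'" "\<And>s a s'. P s a s' \<le> 1"
    and "\<And>x b. 0 \<le> pil x b" "\<And>x b. pil x b \<le> 1"
  shows "0 \<le> seg_prob T P pil w ss as" and "seg_prob T P pil w ss as \<le> 1"
  unfolding seg_prob_def using assms by (auto intro!: prod_nonneg prod_le_1 mult_le_one)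

lemma sq_le_sq_of_abs_le: "\<bar>x :: real\<bar> \<le> B \<Longrightarrow> x\<^sup>2 \<le> B\<^sup>2"
  using power_mono[of "\<bar>x\<bar>" B 2] by simp

lemma sq_add_le_2_sq: "((x :: real) + y)\<^sup>2 \<le> 2 * x\<^sup>2 + 2 * y\<^sup>2"
  using sum_squares_bound[of x y] by (simp add: power2_sum)

lemma abs_sum_mult_le_card:
  fixes f g :: "'x \<Rightarrow> real"
  assumes f: "\<And>x. x \<in> S \<Longrightarrow> \<bar>f x\<bar> \<le> a" and g: "\<And>x. x \<in> S \<Longrightarrow> \<bar>g x\<bar> \<le> b"
  shows "\<bar>\<Sum>x\<in>S. f x * g x\<bar> \<le> real (card S) * (a * b)"
proof -
  have "\<bar>\<Sum>x\<in>S. f x * g x\<bar> \<le> (\<Sum>x\<in>S. \<bar>f x\<bar> * \<bar>g x\<bar>)"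
    using sum_abs[of "\<lambda>x. f x * g x" S] by (simp add: abs_mult)
  also have "\<dots> \<le> (\<Sum>x\<in>S. a * b)"
    using f g by (intro sum_mono mult_mono) (auto intro: order_trans[OF abs_ge_zero])
  finally show ?thesis by simp
qed

lemma noise1_sq_le:
  fixes Q :: "'s::finite \<times> 's \<times> nat \<Rightarrow> 'a::finite \<Rightarrow> real"
  assumes next_in: "nexts sl a \<in> Sl T"
    and Pl_nonneg: "\<And>sp. 0 \<le> Pl T P pih sl a sp" and Pl_le_1: "\<And>sp. Pl T P pih sl a sp \<le> 1"
  shows "(noise1 T gl P pih Q nexts sl a)\<^sup>2
    \<le> (gl * (1 + real (card (Sl T :: ('s \<times> 's \<times> nat) set))))\<^sup>2 * sqnorm_l T Q"
proof -
  let ?c = "real (card (Sl T :: ('s \<times> 's \<times> nat) set))"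
  let ?N = "sqrt (sqnorm_l T Q)"
  have expectation_le: "\<bar>\<Sum>sp\<in>Sl T. Pl T P pih sl a sp * maxQ Q sp\<bar> \<le> ?c * (1 * ?N)"
    using Pl_nonneg Pl_le_1 abs_maxQ_le_sqnorm_l by (intro abs_sum_mult_le_card) auto
  have "\<bar>noise1 T gl P pih Q nexts sl a\<bar>
      = \<bar>gl\<bar> * \<bar>maxQ Q (nexts sl a) - (\<Sum>sp\<in>Sl T. Pl T P pih sl a sp * maxQ Q sp)\<bar>"
    by (simp add: noise1_def abs_mult[symmetric] right_diff_distrib)
  also have "\<dots> \<le> \<bar>gl\<bar> * (?N + ?c * ?N)"
    using abs_maxQ_le_sqnorm_l[OF next_in] expectation_le
    by (intro mult_left_mono abs_triangle_ineq4[THEN order_trans] add_mono) auto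
  also have "\<dots> = \<bar>gl\<bar> * (1 + ?c) * ?N" by (simp add: algebra_simps)
  finally have "(noise1 T gl P pih Q nexts sl a)\<^sup>2 \<le> (\<bar>gl\<bar> * (1 + ?c) * ?N)\<^sup>2"
    by (rule sq_le_sq_of_abs_le)
  then show ?thesis by (simp add: power_mult_distrib sqnorm_l_nonneg)
qed

lemma sqnorm_l_noise1_le:
  fixes T :: nat and Q :: "'s::finite \<times> 's \<times> nat \<Rightarrow> 'a::finite \<Rightarrow> real"
  defines "c \<equiv> real (card (Sl T :: ('s \<times> 's \<times> nat) set))"
  assumes next_in: "\<forall>sl\<in>Sl T. \<forall>a. nexts sl a \<in> Sl T"
    and Pl_nonneg: "\<And>sl a sp. 0 \<le> Pl T P pih sl a sp" and Pl_le_1: "\<And>sl a sp. Pl T P pih sl a sp \<le> 1"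
  shows "sqnorm_l T (noise1 T gl P pih Q nexts) \<le> c * real CARD('a) * ((gl * (1 + c))\<^sup>2 * sqnorm_l T Q)"
  unfolding c_def
proof (rule sqnorm_l_le_card)
  fix sl :: "'s \<times> 's \<times> nat" and a :: 'a assume "sl \<in> Sl T"
  with next_in show "(noise1 T gl P pih Q nexts sl a)\<^sup>2
      \<le> (gl * (1 + real (card (Sl T :: ('s \<times> 's \<times> nat) set))))\<^sup>2 * sqnorm_l T Q"
    by (intro noise1_sq_le Pl_nonneg Pl_le_1) auto
qed

section \<open>Segments of the high-level process\<close>

text \<open>A segment is identified with its states at times 0..T and its actions at times 0..T-1;
  restricting to these times makes the set of segments finite.\<close>

definition seg_paths :: "nat \<Rightarrow> ((nat \<Rightarrow> 's) \<times> (nat \<Rightarrow> 'a)) set" where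
  "seg_paths T = PiE {..T} (\<lambda>_. UNIV) \<times> seg_actions T"

definition seg_target :: "nat \<Rightarrow> real \<Rightarrow> ('s \<Rightarrow> 'a \<Rightarrow> real) \<Rightarrow> ('s \<Rightarrow> real) \<Rightarrow> (nat \<Rightarrow> 's) \<Rightarrow> (nat \<Rightarrow> 'a) \<Rightarrow> real" where
  "seg_target T gh r v ss as = gh ^ T * v (ss T) + (\<Sum>k<T. gh ^ k * r (ss k) (as k))"

lemma noise2_eq_seg_target:
  "noise2 T gh P r pil Q segS segA s w = seg_target T gh r (maxQ Q) (segS s w) (segA s w)
    - (gh ^ T * (\<Sum>sp\<in>UNIV. Ph T P pil s w sp * maxQ Q sp) + rh T gh P r pil s w)"
  by (simp add: noise2_def seg_target_def)

lemma seg_target_restrict: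
  "seg_target T gh r v (restrict ss {..T}) (restrict as {..<T}) = seg_target T gh r v ss as"
  unfolding seg_target_def by (auto intro!: sum.cong)

lemma borel_measurable_seg_target:
  fixes v :: "'w \<Rightarrow> 's::countable \<Rightarrow> real" and ss :: "'w \<Rightarrow> nat \<Rightarrow> 's" and as :: "'w \<Rightarrow> nat \<Rightarrow> 'a::countable"
  assumes v: "\<And>x. (\<lambda>\<omega>. v \<omega> x) \<in> borel_measurable N"
    and ss: "\<And>k. (\<lambda>\<omega>. ss \<omega> k) \<in> measurable N (count_space UNIV)"
    and as: "\<And>k. (\<lambda>\<omega>. as \<omega> k) \<in> measurable N (count_space UNIV)"
  shows "(\<lambda>\<omega>. seg_target T gh r (v \<omega>) (ss \<omega>) (as \<omega>)) \<in> borel_measurable N"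
proof -
  have "(\<lambda>\<omega>. v \<omega> (ss \<omega> T)) \<in> borel_measurable N"
    using measurable_compose_countable[where f="\<lambda>x \<omega>. v \<omega> x", OF v ss] .
  moreover have "(\<lambda>\<omega>. r (ss \<omega> k) (as \<omega> k)) \<in> borel_measurable N" for k
  proof -
    have "(\<lambda>\<omega>. r x (as \<omega> k)) \<in> borel_measurable N" for x
      using measurable_compose[OF as[of k], of "r x" borel] by simp
    then show ?thesis
      using measurable_compose_countable[where f="\<lambda>x \<omega>. r x (as \<omega> k)", OF _ ss[of k]] by simp
  qed
  ultimately show ?thesis unfolding seg_target_def by measurable
qed

lemma finite_seg_paths [simp]: "finite (seg_paths T :: ((nat \<Rightarrow> 's::finite) \<times> (nat \<Rightarrow> 'a::finite)) set)"
  unfolding seg_paths_def seg_actions_def by (intro finite_cartesian_product finite_PiE) auto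

lemma restrict_mem_seg_paths: "(restrict f {..T}, restrict g {..<T}) \<in> seg_paths T"
  by (simp add: seg_paths_def seg_actions_def)

lemma restrict_eq_seg_path_iff:
  assumes "(ss, as) \<in> seg_paths T"
  shows "(restrict f {..T}, restrict g {..<T}) = (ss, as) \<longleftrightarrow> (\<forall>k\<le>T. f k = ss k) \<and> (\<forall>k<T. g k = as k)"
  using assms by (auto simp: seg_paths_def seg_actions_def PiE_def extensional_def fun_eq_iff)

lemma restrict_seg_path_event:
  assumes "x \<in> seg_paths T"
  shows "{\<omega>. (restrict (ss \<omega>) {..T}, restrict (as \<omega>) {..<T}) = x}
    = {\<omega>. (\<forall>k\<le>T. ss \<omega> k = fst x k) \<and> (\<forall>k<T. as \<omega> k = snd x k)}"
  using restrict_eq_seg_path_iff[of "fst x" "snd x"] assms by simp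

lemma sets_restrict_eq_seg_path:
  fixes T :: nat
  assumes [measurable]: "\<And>k. (\<lambda>\<omega>. ss \<omega> k) \<in> measurable N (count_space UNIV)"
    and [measurable]: "\<And>k. (\<lambda>\<omega>. as \<omega> k) \<in> measurable N (count_space UNIV)"
  shows "{\<omega> \<in> space N. (restrict (ss \<omega>) {..T}, restrict (as \<omega>) {..<T}) = x} \<in> sets N"
proof (cases "x \<in> seg_paths T")
  case True
  then have "{\<omega> \<in> space N. (restrict (ss \<omega>) {..T}, restrict (as \<omega>) {..<T}) = x}
      = {\<omega> \<in> space N. (\<forall>k\<le>T. ss \<omega> k = fst x k) \<and> (\<forall>k<T. as \<omega> k = snd x k)}"
    using restrict_seg_path_event[of x T ss as] by blast
  then show ?thesis by simp
next
  case False
  then have "{\<omega> \<in> space N. (restrict (ss \<omega>) {..T}, restrict (as \<omega>) {..<T}) = x} = {}"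
    using restrict_mem_seg_paths by blast
  then show ?thesis by (metis sets.empty_sets)
qed

lemma Ph_nonneg_le_card:
  fixes P :: "'s::finite \<Rightarrow> 'a::finite \<Rightarrow> 's \<Rightarrow> real"
  assumes seg_nonneg: "\<And>ss as. 0 \<le> seg_prob T P pil w ss as"
    and seg_le_1: "\<And>ss as. seg_prob T P pil w ss as \<le> 1"
  shows "0 \<le> Ph T P pil s w sp"
    and "Ph T P pil s w sp \<le> real (card (seg_paths T :: ((nat \<Rightarrow> 's) \<times> (nat \<Rightarrow> 'a)) set))"
proof -
  show "0 \<le> Ph T P pil s w sp" unfolding Ph_def by (intro sum_nonneg seg_nonneg)
  have sub: "{ss \<in> seg_states T s. ss T = sp} \<subseteq> PiE {..T} (\<lambda>_. UNIV :: 's set)"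
    by (auto simp: seg_states_def)
  have "Ph T P pil s w sp \<le> (\<Sum>ss\<in>{ss \<in> seg_states T s. ss T = sp}. \<Sum>as\<in>(seg_actions T :: (nat \<Rightarrow> 'a) set). 1)"
    unfolding Ph_def by (intro sum_mono seg_le_1)
  also have "\<dots> \<le> (\<Sum>ss\<in>PiE {..T} (\<lambda>_. UNIV :: 's set). \<Sum>as\<in>(seg_actions T :: (nat \<Rightarrow> 'a) set). 1)"
    by (intro sum_mono2[OF _ sub]) (auto intro: finite_PiE)
  also have "\<dots> = real (card (seg_paths T :: ((nat \<Rightarrow> 's) \<times> (nat \<Rightarrow> 'a)) set))"
    by (simp add: seg_paths_def card_cartesian_product)
  finally show "Ph T P pil s w sp \<le> real (card (seg_paths T :: ((nat \<Rightarrow> 's) \<times> (nat \<Rightarrow> 'a)) set))" .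
qed

lemma abs_discounted_return_le:
  fixes r :: "'s \<Rightarrow> 'a \<Rightarrow> real"
  assumes "0 \<le> gh" "gh \<le> 1" and r_bound: "\<And>s a. \<bar>r s a\<bar> \<le> rbar"
  shows "\<bar>\<Sum>k<T. gh ^ k * r (ss k) (as k)\<bar> \<le> T * rbar"
proof -
  have "\<bar>\<Sum>k<T. gh ^ k * r (ss k) (as k)\<bar> \<le> (\<Sum>k<T. \<bar>gh ^ k * r (ss k) (as k)\<bar>)" by (rule sum_abs)
  also have "\<dots> \<le> (\<Sum>k<T. rbar)"
  proof (rule sum_mono)
    fix k
    have "\<bar>gh ^ k\<bar> * \<bar>r (ss k) (as k)\<bar> \<le> 1 * rbar"
      using assms by (intro mult_mono) (auto simp: power_le_one)
    then show "\<bar>gh ^ k * r (ss k) (as k)\<bar> \<le> rbar" by (simp add: abs_mult)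
  qed
  finally show ?thesis by simp
qed

lemma abs_rh_le:
  fixes P :: "'s::finite \<Rightarrow> 'a::finite \<Rightarrow> 's \<Rightarrow> real" and r :: "'s \<Rightarrow> 'a \<Rightarrow> real"
  assumes seg_nonneg: "\<And>ss as. 0 \<le> seg_prob T P pil w ss as"
    and seg_le_1: "\<And>ss as. seg_prob T P pil w ss as \<le> 1"
    and gh: "0 \<le> gh" "gh \<le> 1" and r_bound: "\<And>s a. \<bar>r s a\<bar> \<le> rbar"
  shows "\<bar>rh T gh P r pil s w\<bar> \<le> real (card (seg_paths T :: ((nat \<Rightarrow> 's) \<times> (nat \<Rightarrow> 'a)) set)) * (T * rbar)"
proof -
  have rbar: "0 \<le> rbar" using r_bound[of undefined undefined] by linarith
  have sub: "seg_states T s \<subseteq> PiE {..T} (\<lambda>_. UNIV :: 's set)" by (auto simp: seg_states_def)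
  have "\<bar>rh T gh P r pil s w\<bar> \<le> (\<Sum>ss\<in>seg_states T s. \<Sum>as\<in>(seg_actions T :: (nat \<Rightarrow> 'a) set).
      \<bar>seg_prob T P pil w ss as * (\<Sum>k<T. gh ^ k * r (ss k) (as k))\<bar>)"
    unfolding rh_def by (rule order_trans[OF sum_abs sum_mono[OF sum_abs]])
  also have "\<dots> \<le> (\<Sum>ss\<in>seg_states T s. \<Sum>as\<in>(seg_actions T :: (nat \<Rightarrow> 'a) set). T * rbar)"
  proof (intro sum_mono)
    fix ss as
    have "\<bar>seg_prob T P pil w ss as\<bar> * \<bar>\<Sum>k<T. gh ^ k * r (ss k) (as k)\<bar> \<le> 1 * (T * rbar)"
      using seg_nonneg seg_le_1 abs_discounted_return_le[OF gh r_bound] by (intro mult_mono) auto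
    then show "\<bar>seg_prob T P pil w ss as * (\<Sum>k<T. gh ^ k * r (ss k) (as k))\<bar> \<le> T * rbar"
      by (simp add: abs_mult)
  qed
  also have "\<dots> \<le> (\<Sum>ss\<in>PiE {..T} (\<lambda>_. UNIV :: 's set). \<Sum>as\<in>(seg_actions T :: (nat \<Rightarrow> 'a) set). T * rbar)"
    using rbar by (intro sum_mono2[OF _ sub]) (auto intro: finite_PiE sum_nonneg)
  also have "\<dots> = real (card (seg_paths T :: ((nat \<Rightarrow> 's) \<times> (nat \<Rightarrow> 'a)) set)) * (T * rbar)"
    by (simp add: seg_paths_def card_cartesian_product)
  finally show ?thesis .
qed

lemma abs_seg_target_le:
  fixes r :: "'s \<Rightarrow> 'a \<Rightarrow> real"
  assumes gh: "0 \<le> gh" "gh \<le> 1" and r_bound: "\<And>s a. \<bar>r s a\<bar> \<le> rbar"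
  shows "\<bar>seg_target T gh r v ss as\<bar> \<le> \<bar>v (ss T)\<bar> + T * rbar"
proof -
  have "\<bar>gh ^ T * v (ss T)\<bar> \<le> 1 * \<bar>v (ss T)\<bar>"
    unfolding abs_mult using gh by (intro mult_right_mono) (auto simp: power_le_one)
  then show ?thesis
    unfolding seg_target_def using abs_discounted_return_le[where r=r and T=T and ss=ss and as=as, OF gh r_bound]
      abs_triangle_ineq[of "gh ^ T * v (ss T)"] by linarith
qed

lemma noise2_sq_le:
  fixes T :: nat and P :: "'s::finite \<Rightarrow> 'a::finite \<Rightarrow> 's \<Rightarrow> real" and r :: "'s \<Rightarrow> 'a \<Rightarrow> real"
  defines "c \<equiv> real (card (seg_paths T :: ((nat \<Rightarrow> 's) \<times> (nat \<Rightarrow> 'a)) set))"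
  assumes seg_nonneg: "\<And>ss as. 0 \<le> seg_prob T P pil w ss as"
    and seg_le_1: "\<And>ss as. seg_prob T P pil w ss as \<le> 1"
    and gh: "0 \<le> gh" "gh \<le> 1" and r_bound: "\<And>s a. \<bar>r s a\<bar> \<le> rbar"
  shows "(noise2 T gh P r pil Q segS segA s w)\<^sup>2
    \<le> 2 * (1 + real CARD('s) * c)\<^sup>2 * sqnorm_h Q + 2 * ((1 + c) * T * rbar)\<^sup>2"
proof -
  let ?N = "sqrt (sqnorm_h Q)"
  let ?E = "\<Sum>sp\<in>UNIV. Ph T P pil s w sp * maxQ Q sp"
  have ghT: "0 \<le> gh ^ T" "gh ^ T \<le> 1" using gh by (auto simp: power_le_one)
  have rbar: "0 \<le> rbar" using r_bound[of undefined undefined] by linarith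
  have E_le: "\<bar>?E\<bar> \<le> real CARD('s) * (c * ?N)"
    unfolding c_def using Ph_nonneg_le_card[OF seg_nonneg seg_le_1] abs_maxQ_le_sqnorm_h
    by (intro abs_sum_mult_le_card) auto
  have "\<bar>gh ^ T * ?E\<bar> = gh ^ T * \<bar>?E\<bar>" using ghT(1) by (simp add: abs_mult)
  then have "\<bar>noise2 T gh P r pil Q segS segA s w\<bar>
      \<le> \<bar>seg_target T gh r (maxQ Q) (segS s w) (segA s w)\<bar> + gh ^ T * \<bar>?E\<bar> + \<bar>rh T gh P r pil s w\<bar>"
    unfolding noise2_eq_seg_target by linarith
  also have "\<dots> \<le> (?N + T * rbar) + 1 * (real CARD('s) * (c * ?N)) + c * (T * rbar)"
    unfolding c_def
    using abs_maxQ_le_sqnorm_h ghT E_le[unfolded c_def] rbar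
      abs_rh_le[where r=r, OF seg_nonneg seg_le_1 gh r_bound]
    by (intro add_mono mult_mono order_trans[OF abs_seg_target_le[where r=r, OF gh r_bound]]) auto
  also have "\<dots> = (1 + real CARD('s) * c) * ?N + (1 + c) * T * rbar" by (simp add: algebra_simps)
  finally have "(noise2 T gh P r pil Q segS segA s w)\<^sup>2 \<le> ((1 + real CARD('s) * c) * ?N + (1 + c) * T * rbar)\<^sup>2"
    by (rule sq_le_sq_of_abs_le)
  also have "\<dots> \<le> 2 * ((1 + real CARD('s) * c) * ?N)\<^sup>2 + 2 * ((1 + c) * T * rbar)\<^sup>2"
    by (rule sq_add_le_2_sq)
  also have "\<dots> = 2 * (1 + real CARD('s) * c)\<^sup>2 * sqnorm_h Q + 2 * ((1 + c) * T * rbar)\<^sup>2"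
    by (simp add: power_mult_distrib sqnorm_h_nonneg)
  finally show ?thesis .
qed

lemma sqnorm_h_noise2_le:
  fixes T :: nat and P :: "'s::finite \<Rightarrow> 'a::finite \<Rightarrow> 's \<Rightarrow> real" and r :: "'s \<Rightarrow> 'a \<Rightarrow> real"
  defines "c \<equiv> real (card (seg_paths T :: ((nat \<Rightarrow> 's) \<times> (nat \<Rightarrow> 'a)) set))"
  assumes seg_nonneg: "\<And>w ss as. 0 \<le> seg_prob T P pil w ss as"
    and seg_le_1: "\<And>w ss as. seg_prob T P pil w ss as \<le> 1"
    and gh: "0 \<le> gh" "gh \<le> 1" and r_bound: "\<And>s a. \<bar>r s a\<bar> \<le> rbar"
  shows "sqnorm_h (noise2 T gh P r pil Q segS segA)
    \<le> real CARD('s) * real CARD('s) * (2 * (1 + real CARD('s) * c)\<^sup>2) * sqnorm_h Q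
      + real CARD('s) * real CARD('s) * (2 * ((1 + c) * T * rbar)\<^sup>2)"
  using sqnorm_h_le_card[OF noise2_sq_le[OF seg_nonneg seg_le_1 gh r_bound, folded c_def]]
  by (simp add: algebra_simps)

lemma seg_paths_expectation:
  fixes P :: "'s::finite \<Rightarrow> 'a::finite \<Rightarrow> 's \<Rightarrow> real" and q :: "'s \<Rightarrow> real"
  shows "(\<Sum>x\<in>seg_paths T. seg_target T gh r q (fst x) (snd x)
            * (if fst x 0 = s then seg_prob T P pil w (fst x) (snd x) else 0))
    = gh ^ T * (\<Sum>sp\<in>UNIV. Ph T P pil s w sp * q sp) + rh T gh P r pil s w"
proof -
  let ?p = "seg_prob T P pil w"
  let ?R = "\<lambda>ss as. \<Sum>k<T. gh ^ k * r (ss k) (as k)"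
  let ?A = "seg_actions T :: (nat \<Rightarrow> 'a) set"
  have fin: "finite (PiE {..T} (\<lambda>_. UNIV :: 's set))" by (auto intro: finite_PiE)
  then have fin_seg: "finite (seg_states T s)" by (auto simp: seg_states_def)
  have "(\<Sum>x\<in>seg_paths T. (gh ^ T * q (fst x T) + ?R (fst x) (snd x))
            * (if fst x 0 = s then ?p (fst x) (snd x) else 0))
      = (\<Sum>ss\<in>PiE {..T} (\<lambda>_. UNIV). if ss 0 = s
            then (\<Sum>as\<in>?A. ?p ss as * (gh ^ T * q (ss T) + ?R ss as)) else 0)"
    unfolding seg_paths_def sum.cartesian_product' by (intro sum.cong) (auto simp: mult.commute)
  also have "\<dots> = (\<Sum>ss\<in>seg_states T s. \<Sum>as\<in>?A. ?p ss as * (gh ^ T * q (ss T) + ?R ss as))"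
    by (simp add: seg_states_def sum.inter_filter[OF fin])
  also have "\<dots> = gh ^ T * (\<Sum>ss\<in>seg_states T s. (\<Sum>as\<in>?A. ?p ss as) * q (ss T))
      + (\<Sum>ss\<in>seg_states T s. \<Sum>as\<in>?A. ?p ss as * ?R ss as)"
    by (simp add: distrib_left sum.distrib sum_distrib_left sum_distrib_right mult_ac)
  also have "(\<Sum>ss\<in>seg_states T s. (\<Sum>as\<in>?A. ?p ss as) * q (ss T))
      = (\<Sum>sp\<in>UNIV. Ph T P pil s w sp * q sp)"
  proof -
    have "(\<Sum>sp\<in>UNIV. Ph T P pil s w sp * q sp)
        = (\<Sum>sp\<in>UNIV. \<Sum>ss\<in>{ss \<in> seg_states T s. ss T = sp}. (\<Sum>as\<in>?A. ?p ss as) * q (ss T))"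
      unfolding Ph_def by (auto simp: sum_distrib_right intro!: sum.cong)
    also have "\<dots> = (\<Sum>ss\<in>seg_states T s. (\<Sum>as\<in>?A. ?p ss as) * q (ss T))"
      by (rule sum.group[OF fin_seg]) auto
    finally show ?thesis by simp
  qed
  finally show ?thesis by (simp add: rh_def seg_target_def)
qed

section \<open>One step of the iteration\<close>

locale nested_subalgebras = finite_measure_subalgebra M Hn for M :: "'w measure" and Hn +
  fixes Hs :: "'w measure"
  assumes subalg_s: "subalgebra M Hs" and sets_nested: "sets Hn \<subseteq> sets Hs"
begin

lemma subalgebra_Hs_Hn: "subalgebra Hs Hn"
  using subalg subalg_s sets_nested by (simp add: subalgebra_def)

lemmas measurable_Hn_Hs = measurable_from_subalg[OF subalgebra_Hs_Hn]

lemma discrete_sample_centered: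
  assumes S: "finite S" and X_in: "AE \<omega> in M. X \<omega> \<in> S"
    and X_meas: "\<And>x. {\<omega> \<in> space M. X \<omega> = x} \<in> sets M"
    and V_meas: "\<And>x. (\<lambda>\<omega>. V \<omega> x) \<in> borel_measurable Hn"
    and V_int: "\<And>x. integrable M (\<lambda>\<omega>. V \<omega> x)"
    and VX_meas: "(\<lambda>\<omega>. V \<omega> (X \<omega>)) \<in> borel_measurable Hs"
    and p_meas: "\<And>x. (\<lambda>\<omega>. p \<omega> x) \<in> borel_measurable Hn"
    and law: "\<And>x. x \<in> S \<Longrightarrow> AE \<omega> in M. real_cond_exp M Hn (indicator {\<omega>. X \<omega> = x}) \<omega> = p \<omega> x"
  defines "D \<equiv> \<lambda>\<omega>. V \<omega> (X \<omega>) - (\<Sum>x\<in>S. V \<omega> x * p \<omega> x)"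
  shows "D \<in> borel_measurable Hs" and "integrable M D"
    and "AE \<omega> in M. real_cond_exp M Hn D \<omega> = 0"
proof -
  have E_meas: "(\<lambda>\<omega>. \<Sum>x\<in>S. V \<omega> x * p \<omega> x) \<in> borel_measurable Hn"
    by (intro borel_measurable_sum borel_measurable_times V_meas p_meas)
  note discrete = real_cond_exp_discrete[OF S X_in X_meas V_meas V_int measurable_from_subalg[OF subalg_s VX_meas] law]
  show "integrable M D" and "AE \<omega> in M. real_cond_exp M Hn D \<omega> = 0"
    unfolding D_def using real_cond_exp_centered[OF discrete(1) E_meas discrete(2)] by simp_all
  show "D \<in> borel_measurable Hs"
    unfolding D_def using VX_meas measurable_Hn_Hs[OF E_meas] by (rule borel_measurable_diff)
qed

lemma AE_next_in_Sl:
  assumes T: "1 \<le> T"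
    and nexts_meas: "(\<lambda>\<omega>. nexts \<omega> sl a) \<in> measurable Hs (count_space UNIV)"
    and law: "\<And>sp. AE \<omega> in M. real_cond_exp M Hn (indicator {\<omega>. nexts \<omega> sl a = sp}) \<omega>
                        = Pl T P (pih \<omega>) sl a sp"
  shows "AE \<omega> in M. nexts \<omega> sl a \<in> (Sl T :: ('s::finite \<times> 's \<times> nat) set)"
proof (rule AE_mem_of_real_cond_exp_indicator_eq_0)
  show "countable (- (Sl T :: ('s \<times> 's \<times> nat) set))" by (rule countableI_type)
  fix sp :: "'s \<times> 's \<times> nat"
  show "{\<omega> \<in> space M. nexts \<omega> sl a = sp} \<in> sets M"
    using pred_count_space_const1[OF measurable_from_subalg[OF subalg_s nexts_meas]]
    by (simp add: pred_def)
  assume "sp \<notin> Sl T"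
  with law[of sp] show "AE \<omega> in M. real_cond_exp M Hn (indicator {\<omega>. nexts \<omega> sl a = sp}) \<omega> = 0"
    by (simp add: Pl_eq_0_if_notin_Sl[OF T])
qed

lemma noise1_martingale_difference:
  fixes ql :: "'w \<Rightarrow> 's::finite \<times> 's \<times> nat \<Rightarrow> 'a::finite \<Rightarrow> real"
  assumes T: "1 \<le> T"
    and ql_meas: "\<And>sl b. (\<lambda>\<omega>. ql \<omega> sl b) \<in> borel_measurable Hn"
    and ql_int: "\<And>sl b. integrable M (\<lambda>\<omega>. ql \<omega> sl b)"
    and pih_meas: "\<And>s w. (\<lambda>\<omega>. pih \<omega> s w) \<in> borel_measurable Hn"
    and nexts_meas: "(\<lambda>\<omega>. nexts \<omega> sl a) \<in> measurable Hs (count_space UNIV)"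
    and law: "\<And>sp. AE \<omega> in M. real_cond_exp M Hn (indicator {\<omega>. nexts \<omega> sl a = sp}) \<omega>
                        = Pl T P (pih \<omega>) sl a sp"
  shows "(\<lambda>\<omega>. noise1 T gl P (pih \<omega>) (ql \<omega>) (nexts \<omega>) sl a) \<in> borel_measurable Hs"
    and "integrable M (\<lambda>\<omega>. noise1 T gl P (pih \<omega>) (ql \<omega>) (nexts \<omega>) sl a)"
    and "AE \<omega> in M. real_cond_exp M Hn (\<lambda>\<omega>. noise1 T gl P (pih \<omega>) (ql \<omega>) (nexts \<omega>) sl a) \<omega> = 0"
proof -
  define V where "V \<omega> sp = gl * maxQ (ql \<omega>) sp" for \<omega> sp
  define p where "p \<omega> sp = Pl T P (pih \<omega>) sl a sp" for \<omega> sp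
  have D_eq: "(\<lambda>\<omega>. noise1 T gl P (pih \<omega>) (ql \<omega>) (nexts \<omega>) sl a)
      = (\<lambda>\<omega>. V \<omega> (nexts \<omega> sl a) - (\<Sum>sp\<in>Sl T. V \<omega> sp * p \<omega> sp))"
    by (simp add: noise1_def V_def p_def sum_distrib_left mult_ac)
  have next_in: "AE \<omega> in M. nexts \<omega> sl a \<in> Sl T" using T nexts_meas law by (rule AE_next_in_Sl)
  have next_meas: "{\<omega> \<in> space M. nexts \<omega> sl a = sp} \<in> sets M" for sp
    using pred_count_space_const1[OF measurable_from_subalg[OF subalg_s nexts_meas]]
    by (simp add: pred_def)
  have V_meas: "(\<lambda>\<omega>. V \<omega> sp) \<in> borel_measurable Hn" for sp
    unfolding V_def by (intro borel_measurable_times borel_measurable_const borel_measurable_maxQ ql_meas)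
  have V_int: "integrable M (\<lambda>\<omega>. V \<omega> sp)" for sp
    unfolding V_def using integrable_maxQ[OF ql_int] by (rule integrable_mult_right)
  have VX_meas: "(\<lambda>\<omega>. V \<omega> (nexts \<omega> sl a)) \<in> borel_measurable Hs"
    using measurable_compose_countable[where f="\<lambda>sp \<omega>. V \<omega> sp", OF measurable_Hn_Hs[OF V_meas] nexts_meas] .
  have p_meas: "(\<lambda>\<omega>. p \<omega> sp) \<in> borel_measurable Hn" for sp
    unfolding p_def using pih_meas by (rule borel_measurable_Pl)
  have law_p: "AE \<omega> in M. real_cond_exp M Hn (indicator {\<omega>. nexts \<omega> sl a = sp}) \<omega> = p \<omega> sp" for sp
    unfolding p_def by (rule law)
  note centered = discrete_sample_centered[OF finite_Sl next_in next_meas V_meas V_int VX_meas p_meas law_p,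
      folded D_eq]
  show "(\<lambda>\<omega>. noise1 T gl P (pih \<omega>) (ql \<omega>) (nexts \<omega>) sl a) \<in> borel_measurable Hs"
    and "integrable M (\<lambda>\<omega>. noise1 T gl P (pih \<omega>) (ql \<omega>) (nexts \<omega>) sl a)"
    and "AE \<omega> in M. real_cond_exp M Hn (\<lambda>\<omega>. noise1 T gl P (pih \<omega>) (ql \<omega>) (nexts \<omega>) sl a) \<omega> = 0"
    using centered by simp_all
qed

lemma noise2_martingale_difference:
  fixes qh :: "'w \<Rightarrow> 's::finite \<Rightarrow> 's \<Rightarrow> real" and pil :: "'w \<Rightarrow> 's \<times> 's \<times> nat \<Rightarrow> 'a::finite \<Rightarrow> real"
    and segS :: "'w \<Rightarrow> 's \<Rightarrow> 's \<Rightarrow> nat \<Rightarrow> 's" and segA :: "'w \<Rightarrow> 's \<Rightarrow> 's \<Rightarrow> nat \<Rightarrow> 'a"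
    and r :: "'s \<Rightarrow> 'a \<Rightarrow> real"
  assumes qh_meas: "\<And>x y. (\<lambda>\<omega>. qh \<omega> x y) \<in> borel_measurable Hn"
    and qh_int: "\<And>x y. integrable M (\<lambda>\<omega>. qh \<omega> x y)"
    and pil_meas: "\<And>x b. (\<lambda>\<omega>. pil \<omega> x b) \<in> borel_measurable Hn"
    and segS_meas: "\<And>k. (\<lambda>\<omega>. segS \<omega> s w k) \<in> measurable Hs (count_space UNIV)"
    and segA_meas: "\<And>k. (\<lambda>\<omega>. segA \<omega> s w k) \<in> measurable Hs (count_space UNIV)"
    and law: "\<And>ss as. AE \<omega> in M. real_cond_exp M Hn
         (indicator {\<omega>. (\<forall>k\<le>T. segS \<omega> s w k = ss k) \<and> (\<forall>k<T. segA \<omega> s w k = as k)}) \<omega>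
       = (if ss 0 = s then seg_prob T P (pil \<omega>) w ss as else 0)"
  shows "(\<lambda>\<omega>. noise2 T gh P r (pil \<omega>) (qh \<omega>) (segS \<omega>) (segA \<omega>) s w) \<in> borel_measurable Hs"
    and "integrable M (\<lambda>\<omega>. noise2 T gh P r (pil \<omega>) (qh \<omega>) (segS \<omega>) (segA \<omega>) s w)"
    and "AE \<omega> in M. real_cond_exp M Hn
           (\<lambda>\<omega>. noise2 T gh P r (pil \<omega>) (qh \<omega>) (segS \<omega>) (segA \<omega>) s w) \<omega> = 0"
proof -
  define X where "X \<omega> = (restrict (segS \<omega> s w) {..T}, restrict (segA \<omega> s w) {..<T})" for \<omega>
  define V where "V \<omega> x = seg_target T gh r (maxQ (qh \<omega>)) (fst x) (snd x)"
    for \<omega> and x :: "(nat \<Rightarrow> 's) \<times> (nat \<Rightarrow> 'a)"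
  define p where "p \<omega> x = (if fst x 0 = s then seg_prob T P (pil \<omega>) w (fst x) (snd x) else 0)"
    for \<omega> and x :: "(nat \<Rightarrow> 's) \<times> (nat \<Rightarrow> 'a)"
  have VX: "V \<omega> (X \<omega>) = seg_target T gh r (maxQ (qh \<omega>)) (segS \<omega> s w) (segA \<omega> s w)" for \<omega>
    by (simp add: V_def X_def seg_target_restrict)
  have E: "(\<Sum>x\<in>seg_paths T. V \<omega> x * p \<omega> x)
      = gh ^ T * (\<Sum>sp\<in>UNIV. Ph T P (pil \<omega>) s w sp * maxQ (qh \<omega>) sp) + rh T gh P r (pil \<omega>) s w" for \<omega>
    unfolding V_def p_def by (rule seg_paths_expectation)
  have D_eq: "(\<lambda>\<omega>. noise2 T gh P r (pil \<omega>) (qh \<omega>) (segS \<omega>) (segA \<omega>) s w)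
      = (\<lambda>\<omega>. V \<omega> (X \<omega>) - (\<Sum>x\<in>seg_paths T. V \<omega> x * p \<omega> x))"
    by (simp only: VX E noise2_eq_seg_target)
  have X_in: "X \<omega> \<in> seg_paths T" for \<omega>
    unfolding X_def by (rule restrict_mem_seg_paths)
  have X_meas: "{\<omega> \<in> space M. X \<omega> = x} \<in> sets M" for x
    unfolding X_def
    using measurable_from_subalg[OF subalg_s segS_meas] measurable_from_subalg[OF subalg_s segA_meas]
    by (rule sets_restrict_eq_seg_path)
  have V_meas: "(\<lambda>\<omega>. V \<omega> x) \<in> borel_measurable Hn" for x
    unfolding V_def using borel_measurable_maxQ[OF qh_meas] by (rule borel_measurable_seg_target) simp_all
  have V_int: "integrable M (\<lambda>\<omega>. V \<omega> x)" for x
    unfolding V_def seg_target_def using integrable_maxQ[where Q=qh, OF qh_int] by auto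
  have VX_meas: "(\<lambda>\<omega>. V \<omega> (X \<omega>)) \<in> borel_measurable Hs"
    unfolding VX using measurable_Hn_Hs[OF borel_measurable_maxQ[OF qh_meas]] segS_meas segA_meas
    by (rule borel_measurable_seg_target)
  have p_meas: "(\<lambda>\<omega>. p \<omega> x) \<in> borel_measurable Hn" for x
    unfolding p_def seg_prob_def using pil_meas by measurable
  have law_X: "AE \<omega> in M. real_cond_exp M Hn (indicator {\<omega>. X \<omega> = x}) \<omega> = p \<omega> x"
    if "x \<in> seg_paths T" for x
    using law[of "fst x" "snd x"] unfolding X_def restrict_seg_path_event[OF that] p_def .
  note centered = discrete_sample_centered[OF finite_seg_paths AE_I2[OF X_in] X_meas V_meas V_int VX_meas
      p_meas law_X, folded D_eq]
  show "(\<lambda>\<omega>. noise2 T gh P r (pil \<omega>) (qh \<omega>) (segS \<omega>) (segA \<omega>) s w) \<in> borel_measurable Hs"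
    and "integrable M (\<lambda>\<omega>. noise2 T gh P r (pil \<omega>) (qh \<omega>) (segS \<omega>) (segA \<omega>) s w)"
    and "AE \<omega> in M. real_cond_exp M Hn
           (\<lambda>\<omega>. noise2 T gh P r (pil \<omega>) (qh \<omega>) (segS \<omega>) (segA \<omega>) s w) \<omega> = 0"
    using centered by simp_all
qed

end

locale feudal_q_learning = prob_space M
  for M :: "'w measure" and H :: "nat \<Rightarrow> 'w measure"
    and T :: nat and P :: "'s::finite \<Rightarrow> 'a::finite \<Rightarrow> 's \<Rightarrow> real"
    and r :: "'s \<Rightarrow> 'a \<Rightarrow> real" and rbar gh gl :: real
    and Qh :: "nat \<Rightarrow> 'w \<Rightarrow> 's \<Rightarrow> 's \<Rightarrow> real"
    and Ql :: "nat \<Rightarrow> 'w \<Rightarrow> 's \<times> 's \<times> nat \<Rightarrow> 'a \<Rightarrow> real"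
    and Pih :: "('s \<Rightarrow> 's \<Rightarrow> real) \<Rightarrow> ('s \<times> 's \<times> nat \<Rightarrow> 'a \<Rightarrow> real) \<Rightarrow> 's \<Rightarrow> 's \<Rightarrow> real"
    and Pil :: "('s \<Rightarrow> 's \<Rightarrow> real) \<Rightarrow> ('s \<times> 's \<times> nat \<Rightarrow> 'a \<Rightarrow> real) \<Rightarrow> 's \<times> 's \<times> nat \<Rightarrow> 'a \<Rightarrow> real"
    and smp :: "nat \<Rightarrow> 'w \<Rightarrow> 's \<times> 's \<times> nat \<Rightarrow> 'a \<Rightarrow> 's \<times> 's \<times> nat"
    and segS :: "nat \<Rightarrow> 'w \<Rightarrow> 's \<Rightarrow> 's \<Rightarrow> nat \<Rightarrow> 's"
    and segA :: "nat \<Rightarrow> 'w \<Rightarrow> 's \<Rightarrow> 's \<Rightarrow> nat \<Rightarrow> 'a" +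
  assumes T: "1 \<le> T"
    and gh: "0 \<le> gh" "gh \<le> 1"
    and P_nonneg: "\<And>s a s'. 0 \<le> P s a s'"
    and P_sum: "\<And>s a. (\<Sum>s'\<in>UNIV. P s a s') = 1"
    and r_bound: "\<And>s a. \<bar>r s a\<bar> \<le> rbar"
    and Pih_nonneg: "\<And>qh ql s w. 0 \<le> Pih qh ql s w"
    and Pih_sum: "\<And>qh ql s. (\<Sum>w\<in>UNIV. Pih qh ql s w) = 1"
    and Pil_nonneg: "\<And>qh ql sl a. 0 \<le> Pil qh ql sl a"
    and Pil_sum: "\<And>qh ql sl. (\<Sum>a\<in>UNIV. Pil qh ql sl a) = 1"
    and Pih_meas: "(\<lambda>q. Pih (fst q) (snd q)) \<in> measurable (QHspace \<Otimes>\<^sub>M QLspace) QHspace"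
    and Pil_meas: "(\<lambda>q. Pil (fst q) (snd q)) \<in> measurable (QHspace \<Otimes>\<^sub>M QLspace) QLspace"
    and H_sub: "\<And>n. subalgebra M (H n)"
    and H_mono: "\<And>n. sets (H n) \<subseteq> sets (H (Suc n))"
    and Qh_meas: "\<And>n s w. (\<lambda>\<omega>. Qh n \<omega> s w) \<in> borel_measurable (H n)"
    and Ql_meas: "\<And>n sl a. (\<lambda>\<omega>. Ql n \<omega> sl a) \<in> borel_measurable (H n)"
    and Qh_int: "\<And>n s w. integrable M (\<lambda>\<omega>. Qh n \<omega> s w)"
    and Ql_int: "\<And>n sl a. integrable M (\<lambda>\<omega>. Ql n \<omega> sl a)"
    and nxt_meas: "\<And>n sl a. (\<lambda>\<omega>. smp n \<omega> sl a) \<in> measurable (H (Suc n)) (count_space UNIV)"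
    and segS_meas: "\<And>n s w k. (\<lambda>\<omega>. segS n \<omega> s w k) \<in> measurable (H (Suc n)) (count_space UNIV)"
    and segA_meas: "\<And>n s w k. (\<lambda>\<omega>. segA n \<omega> s w k) \<in> measurable (H (Suc n)) (count_space UNIV)"
    and nxt_law: "\<And>n sl a sp. sl \<in> Sl T \<Longrightarrow>
       AE \<omega> in M. real_cond_exp M (H n) (indicator {\<omega>. smp n \<omega> sl a = sp}) \<omega>
                   = Pl T P (Pih (Qh n \<omega>) (Ql n \<omega>)) sl a sp"
    and seg_law: "\<And>n s w ss as.
       AE \<omega> in M. real_cond_exp M (H n)
             (indicator {\<omega>. (\<forall>k\<le>T. segS n \<omega> s w k = ss k) \<and> (\<forall>k<T. segA n \<omega> s w k = as k)}) \<omega>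
           = (if ss 0 = s then seg_prob T P (Pil (Qh n \<omega>) (Ql n \<omega>)) w ss as else 0)"
begin

abbreviation "noise_low \<equiv> noiseL T gl P Pih Qh Ql smp"
abbreviation "noise_high \<equiv> noiseH T gh P r Pil Qh Ql segS segA"
abbreviation "history \<equiv> filt M T Qh Ql noise_low noise_high"

lemma nested_subalgebras_H: "nested_subalgebras M (H n) (H (Suc n))"
  by (intro nested_subalgebras.intro finite_measure_subalgebra.intro nested_subalgebras_axioms.intro
      finite_measure_subalgebra_axioms.intro finite_measure_axioms H_sub H_mono)

lemma Pl_Pih_bounds: "0 \<le> Pl T P (Pih qh ql) sl a sp" "Pl T P (Pih qh ql) sl a sp \<le> 1"
  using P_nonneg P_sum Pih_nonneg Pih_sum
  by (simp_all add: Pl_nonneg_le_1 le_1_of_sum_eq_1)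

lemma seg_prob_Pil_bounds: "0 \<le> seg_prob T P (Pil qh ql) w ss as" "seg_prob T P (Pil qh ql) w ss as \<le> 1"
  using P_nonneg P_sum Pil_nonneg Pil_sum
  by (simp_all add: seg_prob_nonneg_le_1 le_1_of_sum_eq_1)

lemma noise_low_martingale_difference:
  assumes sl: "sl \<in> Sl T"
  shows "(\<lambda>\<omega>. noise_low n \<omega> sl a) \<in> borel_measurable (H (Suc n))"
    and "integrable M (\<lambda>\<omega>. noise_low n \<omega> sl a)"
    and "AE \<omega> in M. real_cond_exp M (H n) (\<lambda>\<omega>. noise_low n \<omega> sl a) \<omega> = 0"
  unfolding noiseL_def
  using nested_subalgebras.noise1_martingale_difference[where ql="Ql n"
      and pih="\<lambda>\<omega>. Pih (Qh n \<omega>) (Ql n \<omega>)" and nexts="smp n", OF nested_subalgebras_H T Ql_meas Ql_int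
      measurable_policy[OF Pih_meas[unfolded QHspace_def QLspace_def] Qh_meas Ql_meas]
      nxt_meas nxt_law[OF sl]]
  by simp_all

lemma noise_high_martingale_difference:
  shows "(\<lambda>\<omega>. noise_high n \<omega> s w) \<in> borel_measurable (H (Suc n))"
    and "integrable M (\<lambda>\<omega>. noise_high n \<omega> s w)"
    and "AE \<omega> in M. real_cond_exp M (H n) (\<lambda>\<omega>. noise_high n \<omega> s w) \<omega> = 0"
  unfolding noiseH_def
  using nested_subalgebras.noise2_martingale_difference[where qh="Qh n"
      and pil="\<lambda>\<omega>. Pil (Qh n \<omega>) (Ql n \<omega>)" and segS="segS n" and segA="segA n", OF nested_subalgebras_H Qh_meas Qh_int
      measurable_policy[OF Pil_meas[unfolded QHspace_def QLspace_def] Qh_meas Ql_meas]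
      segS_meas segA_meas seg_law]
  by simp_all

lemmas history_filtration = filt_filtration[where M=M and H=H and T=T and Qh=Qh and Ql=Ql
    and noise_l=noise_low and noise_h=noise_high, OF H_sub H_mono Ql_meas Qh_meas
    noise_low_martingale_difference(1) noise_high_martingale_difference(1)]

lemma real_cond_exp_history_eq_0:
  assumes "integrable M f" and "AE \<omega> in M. real_cond_exp M (H n) f \<omega> = 0"
  shows "AE \<omega> in M. real_cond_exp M (history n) f \<omega> = 0"
proof -
  interpret finite_measure_subalgebra M "history n"
    by unfold_locales (rule history_filtration(1))
  show ?thesis using H_sub history_filtration(3) assms by (rule real_cond_exp_eq_0_of_finer)
qed

lemma AE_sqnorm_noise_low_le:
  "AE \<omega> in M. sqnorm_l T (noise_low n \<omega>)
     \<le> real (card (Sl T :: ('s \<times> 's \<times> nat) set)) * real CARD('a)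
       * (gl * (1 + real (card (Sl T :: ('s \<times> 's \<times> nat) set))))\<^sup>2 * sqnorm_l T (Ql n \<omega>)"
proof -
  have "AE \<omega> in M. smp n \<omega> sl a \<in> Sl T" if sl: "sl \<in> Sl T" for sl a
    using nested_subalgebras.AE_next_in_Sl[where nexts="smp n", OF nested_subalgebras_H T nxt_meas nxt_law[OF sl]] .
  then have "AE \<omega> in M. \<forall>sl\<in>Sl T. \<forall>a. smp n \<omega> sl a \<in> Sl T"
    by (intro AE_finite_allI finite_Sl) (simp add: AE_all_countable)
  then show ?thesis
    unfolding noiseL_def
  proof eventually_elim
    case (elim \<omega>)
    from sqnorm_l_noise1_le[OF elim Pl_Pih_bounds] show ?case by (simp add: mult.assoc)
  qed
qed

lemma sqnorm_noise_high_le: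
  "sqnorm_h (noise_high n \<omega>)
     \<le> real CARD('s) * real CARD('s)
         * (2 * (1 + real CARD('s) * real (card (seg_paths T :: ((nat \<Rightarrow> 's) \<times> (nat \<Rightarrow> 'a)) set)))\<^sup>2)
         * sqnorm_h (Qh n \<omega>)
       + real CARD('s) * real CARD('s)
         * (2 * ((1 + real (card (seg_paths T :: ((nat \<Rightarrow> 's) \<times> (nat \<Rightarrow> 'a)) set))) * T * rbar)\<^sup>2)"
  unfolding noiseH_def using sqnorm_h_noise2_le[OF seg_prob_Pil_bounds gh r_bound] by simp

lemma ex_noise_low_second_moment_bound:
  "\<exists>K1>0. \<forall>n. AE \<omega> in M. nn_cond_exp M (history n) (\<lambda>\<omega>. ennreal (sqnorm_l T (noise_low n \<omega>))) \<omega>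
      \<le> ennreal (K1 * (1 + sqnorm_l T (Ql n \<omega>) + sqnorm_h (Qh n \<omega>)))"
proof -
  let ?c = "real (card (Sl T :: ('s \<times> 's \<times> nat) set))"
  show ?thesis
    using AE_sqnorm_noise_low_le
    by (intro ex_nn_cond_exp_le_linear_growth[where a="?c * real CARD('a) * (gl * (1 + ?c))\<^sup>2" and b=0 and c=0]
      history_filtration(1)
      borel_measurable_sqnorm_l borel_measurable_sqnorm_h sqnorm_l_nonneg sqnorm_h_nonneg
      measurable_filt measurable_from_subalg[OF H_sub noise_low_martingale_difference(1)]) auto
qed

lemma ex_noise_high_second_moment_bound:
  "\<exists>K2>0. \<forall>n. AE \<omega> in M. nn_cond_exp M (history n) (\<lambda>\<omega>. ennreal (sqnorm_h (noise_high n \<omega>))) \<omega>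
      \<le> ennreal (K2 * (1 + sqnorm_l T (Ql n \<omega>) + sqnorm_h (Qh n \<omega>)))"
proof -
  let ?c = "real (card (seg_paths T :: ((nat \<Rightarrow> 's) \<times> (nat \<Rightarrow> 'a)) set))"
  show ?thesis
    using sqnorm_noise_high_le
    by (intro ex_nn_cond_exp_le_linear_growth[where a=0
        and b="real CARD('s) * real CARD('s) * (2 * (1 + real CARD('s) * ?c)\<^sup>2)"
        and c="real CARD('s) * real CARD('s) * (2 * ((1 + ?c) * T * rbar)\<^sup>2)"] history_filtration(1)
      borel_measurable_sqnorm_l borel_measurable_sqnorm_h sqnorm_l_nonneg sqnorm_h_nonneg
      measurable_filt measurable_from_subalg[OF H_sub noise_high_martingale_difference(1)] AE_I2) auto
qed

end

theorem lemma5: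
  fixes M :: "'w measure" and H :: "nat \<Rightarrow> 'w measure"
    and T :: nat and P :: "'s::finite \<Rightarrow> 'a::finite \<Rightarrow> 's \<Rightarrow> real"
    and r :: "'s \<Rightarrow> 'a \<Rightarrow> real" and rbar gh gl :: real
    and Qh :: "nat \<Rightarrow> 'w \<Rightarrow> 's \<Rightarrow> 's \<Rightarrow> real"
    and Ql :: "nat \<Rightarrow> 'w \<Rightarrow> 's \<times> 's \<times> nat \<Rightarrow> 'a \<Rightarrow> real"
    and Pih :: "('s \<Rightarrow> 's \<Rightarrow> real) \<Rightarrow> ('s \<times> 's \<times> nat \<Rightarrow> 'a \<Rightarrow> real) \<Rightarrow> 's \<Rightarrow> 's \<Rightarrow> real"
    and Pil :: "('s \<Rightarrow> 's \<Rightarrow> real) \<Rightarrow> ('s \<times> 's \<times> nat \<Rightarrow> 'a \<Rightarrow> real) \<Rightarrow> 's \<times> 's \<times> nat \<Rightarrow> 'a \<Rightarrow> real"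
    and smp :: "nat \<Rightarrow> 'w \<Rightarrow> 's \<times> 's \<times> nat \<Rightarrow> 'a \<Rightarrow> 's \<times> 's \<times> nat"
    and segS :: "nat \<Rightarrow> 'w \<Rightarrow> 's \<Rightarrow> 's \<Rightarrow> nat \<Rightarrow> 's"
    and segA :: "nat \<Rightarrow> 'w \<Rightarrow> 's \<Rightarrow> 's \<Rightarrow> nat \<Rightarrow> 'a"
  defines "M1 \<equiv> noiseL T gl P Pih Qh Ql smp"
    and "M2 \<equiv> noiseH T gh P r Pil Qh Ql segS segA"
    and "F \<equiv> filt M T Qh Ql (noiseL T gl P Pih Qh Ql smp) (noiseH T gh P r Pil Qh Ql segS segA)"
  assumes prob: "prob_space M"
    and T: "T \<ge> 1"
    and gh: "0 < gh" "gh < 1" and gl: "0 < gl" "gl < 1"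
    and P_nonneg: "\<And>s a s'. P s a s' \<ge> 0"
    and P_sum: "\<And>s a. (\<Sum>s'\<in>UNIV. P s a s') = 1"
    and r_bound: "\<And>s a. \<bar>r s a\<bar> \<le> rbar"
    and Pih_nonneg: "\<And>qh ql s w. Pih qh ql s w \<ge> 0"
    and Pih_sum: "\<And>qh ql s. (\<Sum>w\<in>UNIV. Pih qh ql s w) = 1"
    and Pil_nonneg: "\<And>qh ql sl a. Pil qh ql sl a \<ge> 0"
    and Pil_sum: "\<And>qh ql sl. (\<Sum>a\<in>UNIV. Pil qh ql sl a) = 1"
    and Pih_meas: "(\<lambda>q. Pih (fst q) (snd q)) \<in> measurable (QHspace \<Otimes>\<^sub>M QLspace) QHspace"
    and Pil_meas: "(\<lambda>q. Pil (fst q) (snd q)) \<in> measurable (QHspace \<Otimes>\<^sub>M QLspace) QLspace"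
    and H_sub: "\<And>n. subalgebra M (H n)"
    and H_mono: "\<And>n. sets (H n) \<subseteq> sets (H (Suc n))"
    and Qh_meas: "\<And>n s w. (\<lambda>\<omega>. Qh n \<omega> s w) \<in> borel_measurable (H n)"
    and Ql_meas: "\<And>n sl a. (\<lambda>\<omega>. Ql n \<omega> sl a) \<in> borel_measurable (H n)"
    and Qh_int: "\<And>n s w. integrable M (\<lambda>\<omega>. Qh n \<omega> s w)"
    and Ql_int: "\<And>n sl a. integrable M (\<lambda>\<omega>. Ql n \<omega> sl a)"
    and nxt_meas: "\<And>n sl a. (\<lambda>\<omega>. smp n \<omega> sl a) \<in> measurable (H (Suc n)) (count_space UNIV)"
    and segS_meas: "\<And>n s w k. (\<lambda>\<omega>. segS n \<omega> s w k) \<in> measurable (H (Suc n)) (count_space UNIV)"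
    and segA_meas: "\<And>n s w k. (\<lambda>\<omega>. segA n \<omega> s w k) \<in> measurable (H (Suc n)) (count_space UNIV)"
    and nxt_law: "\<And>n sl a sp. sl \<in> Sl T \<Longrightarrow>
       AE \<omega> in M. real_cond_exp M (H n) (indicator {\<omega>. smp n \<omega> sl a = sp}) \<omega>
                   = Pl T P (Pih (Qh n \<omega>) (Ql n \<omega>)) sl a sp"
    and seg_law: "\<And>n s w ss as.
       AE \<omega> in M. real_cond_exp M (H n)
             (indicator {\<omega>. (\<forall>k\<le>T. segS n \<omega> s w k = ss k) \<and> (\<forall>k<T. segA n \<omega> s w k = as k)}) \<omega>
           = (if ss 0 = s then seg_prob T P (Pil (Qh n \<omega>) (Ql n \<omega>)) w ss as else 0)"
  shows "(\<forall>n. subalgebra M (F n) \<and> sets (F n) \<subseteq> sets (F (Suc n)))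
    \<and> (\<forall>n sl a. sl \<in> Sl T \<longrightarrow>
          integrable M (\<lambda>\<omega>. M1 n \<omega> sl a)
          \<and> (\<lambda>\<omega>. M1 n \<omega> sl a) \<in> borel_measurable (F (Suc n))
          \<and> (AE \<omega> in M. real_cond_exp M (F n) (\<lambda>\<omega>. M1 n \<omega> sl a) \<omega> = 0))
    \<and> (\<forall>n s w.
          integrable M (\<lambda>\<omega>. M2 n \<omega> s w)
          \<and> (\<lambda>\<omega>. M2 n \<omega> s w) \<in> borel_measurable (F (Suc n))
          \<and> (AE \<omega> in M. real_cond_exp M (F n) (\<lambda>\<omega>. M2 n \<omega> s w) \<omega> = 0))
    \<and> (\<exists>K1>0. \<forall>n. AE \<omega> in M.
          nn_cond_exp M (F n) (\<lambda>\<omega>. ennreal (sqnorm_l T (M1 n \<omega>))) \<omega>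
          \<le> ennreal (K1 * (1 + sqnorm_l T (Ql n \<omega>) + sqnorm_h (Qh n \<omega>))))
    \<and> (\<exists>K2>0. \<forall>n. AE \<omega> in M.
          nn_cond_exp M (F n) (\<lambda>\<omega>. ennreal (sqnorm_h (M2 n \<omega>))) \<omega>
          \<le> ennreal (K2 * (1 + sqnorm_l T (Ql n \<omega>) + sqnorm_h (Qh n \<omega>))))"
proof -
  interpret feudal_q_learning M H T P r rbar gh gl Qh Ql Pih Pil smp segS segA
    by (intro feudal_q_learning.intro feudal_q_learning_axioms.intro prob)
      (fact assms | use gh in linarith)+
  show ?thesis
    unfolding M1_def M2_def F_def
    by (intro conjI allI impI history_filtration(1,2) ex_noise_low_second_moment_bound
        ex_noise_high_second_moment_bound noise_low_martingale_difference(2)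
        noise_high_martingale_difference(2) measurable_filt(3,4) real_cond_exp_history_eq_0
        noise_low_martingale_difference(3) noise_high_martingale_difference(3))
qed

end
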